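(* Let $(X,d)$ be a compact metric space and $\phi\colon\mathbb{R}\times X\to X$ a continuous flow. Then $\phi$ is expansive if and only if $\phi$ is $k^*$-expansive, i.e. for every $\epsilon>0$ there is $\delta>0$ such that whenever $d(\phi_{h(t)}(x),\phi_t(y))<\delta$ for all $t\in\mathbb{R}$, for some $x,y\in X$ and $h\in\mathcal{H}$, there exist $s,t_0\in\mathbb{R}$ with $|s|<\epsilon$ and $\phi_{h(t_0)}(x)=\phi_{t_0+s}(y)$.
   Context: $\mathcal{H}$ is the set of increasing homeomorphisms $h\colon\mathbb{R}\to\mathbb{R}$ with $h(0)=0$. For $x,y\in X$ let $d_\phi(x,y)=\inf\{\operatorname{diam}(\phi_{[a,b]}(z)): z\in X,\ a\le b,\ x,y\in\phi_{[a,b]}(z)\}$ if $y\in\phi_{\mathbb{R}}(x)$ and $d_\phi(x,y)=\operatorname{diam}(X)$ otherwise. $\phi$ is expansive if for every $\beta>0$ there is $\delta>0$ such that whenever $d(\phi_{h(t)}(x),\phi_t(y))<\delta$ for all $t\in\mathbb{R}$ and some $h\in\mathcal{H}$, then $d_\phi(x,y)<\beta$. *)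

theory Defs
  imports "HOL-Analysis.Analysis"
begin

definition is_flow :: "'a::metric_space set \<Rightarrow> (real \<Rightarrow> 'a \<Rightarrow> 'a) \<Rightarrow> bool" where
  "is_flow S phi \<longleftrightarrow>
     continuous_on (UNIV \<times> S) (\<lambda>(t, x). phi t x) \<and>
     (\<forall>t. \<forall>x\<in>S. phi t x \<in> S) \<and>
     (\<forall>x\<in>S. phi 0 x = x) \<and>
     (\<forall>s t. \<forall>x\<in>S. phi (s + t) x = phi s (phi t x))"

definition incr_homeos :: "(real \<Rightarrow> real) set" where
  "incr_homeos = {h. homeomorphism UNIV UNIV h (inv h) \<and> strict_mono h \<and> h 0 = 0}"

definition orbit_dist :: "'a::metric_space set \<Rightarrow> (real \<Rightarrow> 'a \<Rightarrow> 'a) \<Rightarrow> 'a \<Rightarrow> 'a \<Rightarrow> real" where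
  "orbit_dist S phi x y =
     (if y \<in> (\<lambda>t. phi t x) ` UNIV
      then Inf {diameter ((\<lambda>t. phi t z) ` {a..b}) | z a b.
                  z \<in> S \<and> a \<le> b \<and> x \<in> (\<lambda>t. phi t z) ` {a..b} \<and> y \<in> (\<lambda>t. phi t z) ` {a..b}}
      else diameter S)"

definition expansive_flow :: "'a::metric_space set \<Rightarrow> (real \<Rightarrow> 'a \<Rightarrow> 'a) \<Rightarrow> bool" where
  "expansive_flow S phi \<longleftrightarrow>
     (\<forall>\<beta>>0. \<exists>\<delta>>0. \<forall>x\<in>S. \<forall>y\<in>S. \<forall>h\<in>incr_homeos.
        (\<forall>t. dist (phi (h t) x) (phi t y) < \<delta>) \<longrightarrow> orbit_dist S phi x y < \<beta>)"

definition kstar_expansive_flow :: "'a::metric_space set \<Rightarrow> (real \<Rightarrow> 'a \<Rightarrow> 'a) \<Rightarrow> bool" where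
  "kstar_expansive_flow S phi \<longleftrightarrow>
     (\<forall>\<epsilon>>0. \<exists>\<delta>>0. \<forall>x\<in>S. \<forall>y\<in>S. \<forall>h\<in>incr_homeos.
        (\<forall>t. dist (phi (h t) x) (phi t y) < \<delta>) \<longrightarrow>
        (\<exists>s t0. \<bar>s\<bar> < \<epsilon> \<and> phi (h t0) x = phi (t0 + s) y))"

end

theory Submission
  imports Defs
begin

text \<open>
  An expansive flow isolates its fixed points from all other
  orbits; with compactness this yields \<open>\<eta> > 0\<close> such that every non-fixed orbit moves
  by more than \<open>\<eta>\<close> within some time window of length \<open>\<epsilon>\<close>. If \<open>x\<close> is \<open>\<delta>\<close>-shadowed by
  \<open>y\<close>, expansivity applied after recentring time at a suitable \<open>u\<close> in such a window puts
  \<open>phi (h u) x\<close> and \<open>phi u y\<close> on an orbit segment of diameter less than \<open>\<eta>/2\<close>. That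
  segment cannot reach the ends of the window, so the two points are less than \<open>\<epsilon>\<close> apart
  in time.

  k*-expansive implies expansive. k*-expansivity gives \<open>x = phi c y\<close>, and the orbit
  \<open>\<gamma> t = phi t y\<close> is \<open>\<delta>\<close>-shadowed by its reparametrisation \<open>G t = h t + c\<close>, whose lag
  \<open>G t - t\<close> is small at some time. Because fixed points are isolated and there are no
  short periods, a \<open>\<delta>\<close>-return of the orbit after a time in \<open>[e, 2e]\<close> happens only near a
  fixed point, and a \<open>\<delta>\<close>-return after a long excursion near a fixed point ends close to it.
  So while the lag is large the orbit is trapped near a fixed point, and in every case the
  orbit segment from \<open>y\<close> to \<open>x = \<gamma> (G 0)\<close> lies in a small ball, which bounds
  \<open>orbit_dist S phi x y\<close>.
\<close>

lemma incr_homeosI: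
  fixes h g :: "real \<Rightarrow> real"
  assumes "continuous_on UNIV h" "continuous_on UNIV g" "\<And>x. g (h x) = x" "\<And>y. h (g y) = y"
    and "strict_mono h" "h 0 = 0"
  shows "h \<in> incr_homeos"
proof -
  have "inv h = g"
    using inv_f_eq[OF injI] assms(3,4) by (metis ext)
  moreover have "homeomorphism UNIV UNIV h g"
    unfolding homeomorphism_def using assms by (auto intro: range_eqI[of _ _ "g _"] range_eqI[of _ _ "h _"])
  ultimately show ?thesis
    using assms unfolding incr_homeos_def by simp
qed

lemma
  assumes "h \<in> incr_homeos"
  shows incr_homeos_continuous: "continuous_on UNIV h"
    and incr_homeos_inv_continuous: "continuous_on UNIV (inv h)"
    and incr_homeos_inv_apply: "\<And>x. inv h (h x) = x"
    and incr_homeos_apply_inv: "\<And>y. h (inv h y) = y"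
    and incr_homeos_strict_mono: "strict_mono h"
    and incr_homeos_zero: "h 0 = 0"
  using assms unfolding incr_homeos_def homeomorphism_def by auto

lemma id_in_incr_homeos: "(\<lambda>t. t) \<in> incr_homeos"
  by (rule incr_homeosI[where g="\<lambda>t. t"]) (auto simp: strict_mono_def)

lemma incr_homeos_recentre:
  assumes h: "h \<in> incr_homeos"
  shows "(\<lambda>t. h (t + u) - h u) \<in> incr_homeos"
proof (rule incr_homeosI[where g="\<lambda>w. inv h (w + h u) - u"])
  show "continuous_on UNIV (\<lambda>t. h (t + u) - h u)"
    by (intro continuous_intros continuous_on_compose2[OF incr_homeos_continuous[OF h]]) auto
  show "continuous_on UNIV (\<lambda>w. inv h (w + h u) - u)"
    by (intro continuous_intros continuous_on_compose2[OF incr_homeos_inv_continuous[OF h]]) auto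
  show "strict_mono (\<lambda>t. h (t + u) - h u)"
    using incr_homeos_strict_mono[OF h] by (auto simp: strict_mono_def)
qed (auto simp: incr_homeos_inv_apply[OF h] incr_homeos_apply_inv[OF h])

lemma first_hitting_time:
  fixes f :: "real \<Rightarrow> real"
  assumes f: "continuous_on {a..b} f" and "a \<le> b" "f a \<le> c" "c \<le> f b"
  obtains s where "a \<le> s" "s \<le> b" "f s = c" "\<And>t. a \<le> t \<Longrightarrow> t < s \<Longrightarrow> f t < c"
proof -
  define A where "A = {a..b} \<inter> f -` {c..}"
  have "closed A"
    unfolding A_def by (rule continuous_closed_preimage[OF f]) auto
  moreover have "b \<in> A" "bdd_below A"
    using assms by (auto simp: A_def)
  ultimately have sA: "Inf A \<in> A"
    by (intro closed_contains_Inf) auto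
  have below: "f t < c" if "a \<le> t" "t < Inf A" for t
    using that cInf_lower[OF _ \<open>bdd_below A\<close>, of t] sA by (force simp: A_def)
  have "f (Inf A) = c"
  proof (rule ccontr)
    assume "f (Inf A) \<noteq> c"
    then have "c < f (Inf A)" using sA by (simp add: A_def)
    then obtain t where "a \<le> t" "t \<le> Inf A" "f t = c"
      using IVT'[of f a c "Inf A"] sA assms continuous_on_subset[OF f] by (auto simp: A_def)
    then show False
      using below[of t] \<open>f (Inf A) \<noteq> c\<close> by (cases "t = Inf A") auto
  qed
  with sA below show thesis
    using that by (auto simp: A_def)
qed

lemma last_hitting_time:
  fixes f :: "real \<Rightarrow> real"
  assumes f: "continuous_on {a..b} f" and "a \<le> b" "f a \<le> c" "c \<le> f b"
  obtains s where "a \<le> s" "s \<le> b" "f s = c" "\<And>t. s < t \<Longrightarrow> t \<le> b \<Longrightarrow> c < f t"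
proof -
  have "continuous_on {-b..-a} (\<lambda>t. - f (- t))"
    by (intro continuous_intros continuous_on_compose2[OF f]) auto
  then obtain s where s: "-b \<le> s" "s \<le> -a" "- f (- s) = - c"
    and after: "\<And>t. -b \<le> t \<Longrightarrow> t < s \<Longrightarrow> - f (- t) < - c"
    by (rule first_hitting_time[where f="\<lambda>t. - f (- t)" and c="- c"]) (use assms in auto)
  show thesis
  proof (rule that[of "- s"])
    fix t assume "- s < t" "t \<le> b"
    then show "c < f t" using after[of "- t"] by simp
  qed (use s in auto)
qed

lemma LIMSEQ_dist_vanishing:
  fixes A B :: "nat \<Rightarrow> 'a::metric_space"
  assumes "A \<longlonglongrightarrow> a" "(\<lambda>n. dist (A n) (B n)) \<longlonglongrightarrow> 0"
  shows "B \<longlonglongrightarrow> a"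
proof -
  have "(\<lambda>n. dist (A n) a) \<longlonglongrightarrow> 0"
    using assms(1) tendsto_dist_iff by blast
  then have bound: "(\<lambda>n. dist (A n) (B n) + dist (A n) a) \<longlonglongrightarrow> 0"
    using tendsto_add[OF assms(2)] by fastforce
  have "(\<lambda>n. dist (B n) a) \<longlonglongrightarrow> 0"
  proof (rule Lim_null_comparison[OF _ bound])
    show "\<forall>\<^sub>F n in sequentially. norm (dist (B n) a) \<le> dist (A n) (B n) + dist (A n) a"
      by (intro always_eventually allI) (simp add: dist_triangle3)
  qed
  then show ?thesis
    using tendsto_dist_iff by blast
qed

lemma LIMSEQ_dist_le_inverse_Suc:
  fixes A B :: "nat \<Rightarrow> 'a::metric_space"
  assumes "strict_mono \<sigma>" "\<And>n. dist (A n) (B n) \<le> inverse (real (Suc (\<sigma> n)))"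
  shows "(\<lambda>n. dist (A n) (B n)) \<longlonglongrightarrow> 0"
proof (rule Lim_null_comparison[OF always_eventually])
  show "(\<lambda>n. inverse (real (Suc (\<sigma> n)))) \<longlonglongrightarrow> 0"
    using LIMSEQ_subseq_LIMSEQ[OF LIMSEQ_inverse_real_of_nat assms(1)] by (simp add: o_def)
  show "\<forall>n. norm (dist (A n) (B n)) \<le> inverse (real (Suc (\<sigma> n)))"
    using assms(2) by simp
qed

lemma LIMSEQ_eq_if_dist_le_inverse:
  fixes A B :: "nat \<Rightarrow> 'a::metric_space"
  assumes "A \<longlonglongrightarrow> a" "B \<longlonglongrightarrow> b" "strict_mono \<sigma>"
    and "\<And>n. dist (A n) (B n) \<le> inverse (real (Suc (\<sigma> n)))"
  shows "a = b"
  using LIMSEQ_dist_vanishing[OF assms(1) LIMSEQ_dist_le_inverse_Suc[OF assms(3,4)]] assms(2)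
  by (rule LIMSEQ_unique)

lemma monoseq_unbounded_eventually_ge:
  fixes L :: "nat \<Rightarrow> real"
  assumes "monoseq L" "\<not> bdd_above (range L)"
  shows "\<exists>N. \<forall>n\<ge>N. T \<le> L n"
proof -
  have "\<not> decseq L"
  proof
    assume "decseq L"
    then have "L n \<le> L 0" for n
      by (simp add: decseq_def)
    then show False
      using assms(2) by (auto simp: bdd_above_def)
  qed
  then have "incseq L"
    using assms(1) monoseq_iff by blast
  moreover obtain N where "T < L N"
    using assms(2) by (meson bdd_above.I2 not_le)
  ultimately show ?thesis
    by (meson incseq_def less_imp_le order.trans)
qed

section \<open>Curves shadowed by a reparametrisation\<close>

text \<open>
  The abstract setting of the implication from k*-expansive to expansive: \<open>\<gamma>\<close> is an
  orbit \<open>\<lambda>t. phi t y\<close>, \<open>P\<close> the set of fixed points, and \<open>\<gamma> \<circ> G\<close> the shadowing orbit of \<open>x\<close>. The two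
  return assumptions are what k*-expansivity provides for a short return (time in
  \<open>[e, 2e]\<close>) and for a long return along an excursion that stays near a fixed point.
\<close>

locale shadowed_curve =
  fixes \<gamma> :: "real \<Rightarrow> 'a::metric_space" and G :: "real \<Rightarrow> real"
    and P :: "'a set" and e r \<delta> :: real
  assumes continuous_curve: "continuous_on UNIV \<gamma>"
    and continuous_lag: "continuous_on UNIV G"
    and e_pos: "0 < e" and r_pos: "0 < r"
    and curve_oscillation: "\<And>a b. \<bar>a - b\<bar> \<le> 2*e \<Longrightarrow> dist (\<gamma> a) (\<gamma> b) < r/3"
    and return_near_P: "\<And>a b. e \<le> b - a \<Longrightarrow> b - a \<le> 2*e \<Longrightarrow> dist (\<gamma> a) (\<gamma> b) < \<delta> \<Longrightarrow>
        \<exists>p\<in>P. dist (\<gamma> a) p < r/3 \<and> dist (\<gamma> b) p < r/3"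
    and return_close_to_P: "\<And>p a b. p \<in> P \<Longrightarrow> e \<le> b - a \<Longrightarrow> (\<forall>v\<in>{a..b}. dist p (\<gamma> v) \<le> r) \<Longrightarrow>
        dist (\<gamma> a) (\<gamma> b) < \<delta> \<Longrightarrow> dist p (\<gamma> a) < r/2 \<and> dist p (\<gamma> b) < r/2"
    and shadow: "\<And>t. dist (\<gamma> (G t)) (\<gamma> t) < \<delta>"
begin

lemma last_lag_crossing:
  assumes "t0 \<le> t1" "G t0 - t0 \<le> 2*e" "2*e < G t1 - t1"
  obtains tc p where "tc \<le> t1" "p \<in> P"
    "\<And>t. tc \<le> t \<Longrightarrow> t \<le> t1 \<Longrightarrow> e \<le> G t - t"
    "\<And>u. tc \<le> u \<Longrightarrow> u \<le> G tc \<Longrightarrow> dist p (\<gamma> u) < 2*r/3"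
proof -
  have "continuous_on {t0..t1} (\<lambda>t. G t - t)"
    by (intro continuous_intros continuous_on_subset[OF continuous_lag]) auto
  then obtain tc where tc: "tc \<le> t1" "G tc - tc = 2*e"
    and after: "\<And>t. tc < t \<Longrightarrow> t \<le> t1 \<Longrightarrow> 2*e < G t - t"
    by (rule last_hitting_time) (use assms in auto)
  have lag: "e \<le> G t - t" if "tc \<le> t" "t \<le> t1" for t
    using that after[of t] tc e_pos by (cases "t = tc") auto
  have "e \<le> G tc - tc" "G tc - tc \<le> 2*e" "dist (\<gamma> tc) (\<gamma> (G tc)) < \<delta>"
    using tc e_pos shadow[of tc] by (auto simp: dist_commute)
  then obtain p where "p \<in> P" and p_tc: "dist (\<gamma> tc) p < r/3"
    using return_near_P by blast
  have "dist p (\<gamma> u) < 2*r/3" if "tc \<le> u" "u \<le> G tc" for u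
    using dist_triangle[of p "\<gamma> u" "\<gamma> tc"] p_tc curve_oscillation[of u tc] that tc
    by (simp add: dist_commute)
  with tc(1) \<open>p \<in> P\<close> lag show thesis
    by (rule that)
qed

lemma segment_covered:
  assumes "tc \<le> t" and start: "\<forall>u\<in>{tc..G tc}. dist p (\<gamma> u) \<le> r"
    and image: "\<forall>t'\<in>{tc..t}. dist p (\<gamma> (G t')) \<le> r"
  shows "\<forall>u\<in>{t..G t}. dist p (\<gamma> u) \<le> r"
proof
  fix u assume u: "u \<in> {t..G t}"
  show "dist p (\<gamma> u) \<le> r"
  proof (cases "u \<le> G tc")
    case True
    then show ?thesis using start u \<open>tc \<le> t\<close> by auto
  next
    case False
    then obtain t' where "tc \<le> t'" "t' \<le> t" "G t' = u"
      using IVT'[of G tc u t] u \<open>tc \<le> t\<close> continuous_on_subset[OF continuous_lag] by auto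
    then show ?thesis using image by auto
  qed
qed

text \<open>
  Past the last time \<open>tc\<close> where the lag equals \<open>2e\<close>, the curve is trapped near the point
  \<open>p \<in> P\<close> found at \<open>tc\<close>: as long as \<open>\<gamma>\<close> stays in the \<open>r\<close>-ball, every return ends in the
  \<open>r/2\<close>-ball, so \<open>dist p (\<gamma> (G t))\<close> can never reach \<open>r/2\<close>.
\<close>

lemma lag_segment_in_ball_forward:
  assumes "t0 \<le> t1" "G t0 - t0 \<le> 2*e" "2*e < G t1 - t1"
  shows "\<exists>p. \<forall>u\<in>{t1..G t1}. dist p (\<gamma> u) \<le> r"
proof -
  obtain tc p where tc: "tc \<le> t1" and "p \<in> P"
    and lag: "\<And>t. tc \<le> t \<Longrightarrow> t \<le> t1 \<Longrightarrow> e \<le> G t - t"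
    and near: "\<And>u. tc \<le> u \<Longrightarrow> u \<le> G tc \<Longrightarrow> dist p (\<gamma> u) < 2*r/3"
    using last_lag_crossing[OF assms] by blast
  have near_le: "dist p (\<gamma> u) \<le> r" if "tc \<le> u" "u \<le> G tc" for u
    using near[OF that] r_pos by linarith
  have covered: "\<forall>u\<in>{t..G t}. dist p (\<gamma> u) \<le> r"
    if "tc \<le> t" "\<forall>t'\<in>{tc..t}. dist p (\<gamma> (G t')) \<le> r" for t
    using segment_covered[OF that(1) _ that(2)] near_le by simp
  have leave: "dist p (\<gamma> (G t)) < r/2"
    if "tc \<le> t" "t \<le> t1" "\<forall>u\<in>{t..G t}. dist p (\<gamma> u) \<le> r" for t
  proof -
    have "dist (\<gamma> t) (\<gamma> (G t)) < \<delta>"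
      using shadow[of t] by (simp add: dist_commute)
    then show ?thesis
      using return_close_to_P[OF \<open>p \<in> P\<close> lag[OF that(1,2)] that(3)] by simp
  qed
  have "dist p (\<gamma> (G tc)) < r/2"
    using leave[OF order.refl tc] near_le by simp
  have stay: "dist p (\<gamma> (G t)) < r/2" if t: "tc \<le> t" "t \<le> t1" for t
  proof (rule ccontr)
    assume "\<not> ?thesis"
    then have "r/2 \<le> dist p (\<gamma> (G t))" by simp
    moreover have "continuous_on {tc..t} (\<lambda>t. dist p (\<gamma> (G t)))"
      by (intro continuous_intros continuous_on_compose2[OF continuous_curve]
          continuous_on_subset[OF continuous_lag]) auto
    ultimately obtain ts where ts: "tc \<le> ts" "ts \<le> t" "dist p (\<gamma> (G ts)) = r/2"
      and before: "\<And>t'. tc \<le> t' \<Longrightarrow> t' < ts \<Longrightarrow> dist p (\<gamma> (G t')) < r/2"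
      using first_hitting_time t(1) less_imp_le[OF \<open>dist p (\<gamma> (G tc)) < r/2\<close>] by blast
    have "\<forall>t'\<in>{tc..ts}. dist p (\<gamma> (G t')) \<le> r"
    proof
      fix t' assume "t' \<in> {tc..ts}"
      then have "dist p (\<gamma> (G t')) \<le> r/2"
        using before[of t'] ts(3) by (cases "t' < ts") auto
      then show "dist p (\<gamma> (G t')) \<le> r" using r_pos by linarith
    qed
    then have "\<forall>u\<in>{ts..G ts}. dist p (\<gamma> u) \<le> r"
      using covered ts(1) by blast
    then have "dist p (\<gamma> (G ts)) < r/2"
      using leave ts(1) order.trans[OF ts(2) t(2)] by blast
    with ts show False by simp
  qed
  have "\<forall>t\<in>{tc..t1}. dist p (\<gamma> (G t)) \<le> r"
  proof
    fix t assume "t \<in> {tc..t1}"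
    then show "dist p (\<gamma> (G t)) \<le> r" using stay[of t] r_pos by simp
  qed
  then show ?thesis
    using covered[of t1] tc by blast
qed

end

locale homeo_shadowed_curve = shadowed_curve +
  fixes Gi :: "real \<Rightarrow> real"
  assumes continuous_lag_inv: "continuous_on UNIV Gi"
    and lag_apply_inv: "\<And>t. G (Gi t) = t"
    and lag_inv_apply: "\<And>t. Gi (G t) = t"
    and mono_lag: "mono G"
begin

lemma inverse_shadowed_curve: "shadowed_curve \<gamma> Gi P e r \<delta>"
proof unfold_locales
  show "dist (\<gamma> (Gi t)) (\<gamma> t) < \<delta>" for t
    using shadow[of "Gi t"] by (simp add: lag_apply_inv dist_commute)
qed (fact continuous_curve continuous_lag_inv e_pos r_pos curve_oscillation return_near_P
      return_close_to_P)+

lemma lag_segment_in_ball_after: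
  assumes "t0 \<le> t1" "\<bar>G t0 - t0\<bar> \<le> 2*e"
  shows "\<exists>p. \<forall>u\<in>{min t1 (G t1)..max t1 (G t1)}. dist p (\<gamma> u) \<le> r"
proof -
  consider "\<bar>G t1 - t1\<bar> \<le> 2*e" | "2*e < G t1 - t1" | "2*e < t1 - G t1"
    by linarith
  then show ?thesis
  proof cases
    case 1
    have "dist (\<gamma> t1) (\<gamma> u) \<le> r" if "u \<in> {min t1 (G t1)..max t1 (G t1)}" for u
    proof -
      have "\<bar>t1 - u\<bar> \<le> 2*e"
        using that 1 by (auto simp: abs_le_iff min_def max_def split: if_splits)
      then show ?thesis
        using curve_oscillation[of t1 u] r_pos by linarith
    qed
    then show ?thesis by blast
  next
    case 2
    then show ?thesis
      using lag_segment_in_ball_forward[of t0 t1] assms by (simp add: abs_le_iff)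
  next
    case 3
    interpret inverse: shadowed_curve \<gamma> Gi P e r \<delta>
      by (fact inverse_shadowed_curve)
    have "G t0 \<le> G t1"
      using mono_lag assms(1) by (rule monoD)
    moreover have "Gi (G t0) - G t0 \<le> 2*e" "2*e < Gi (G t1) - G t1"
      using assms 3 by (auto simp: lag_inv_apply)
    moreover have "min t1 (G t1) = G t1" "max t1 (G t1) = t1"
      using 3 e_pos by auto
    ultimately show ?thesis
      using inverse.lag_segment_in_ball_forward[of "G t0" "G t1"]
      by (simp add: lag_inv_apply)
  qed
qed

lemma time_reversal:
  "homeo_shadowed_curve (\<lambda>t. \<gamma> (- t)) (\<lambda>t. - G (- t)) P e r \<delta> (\<lambda>t. - Gi (- t))"
proof unfold_locales
  show "continuous_on UNIV (\<lambda>t. \<gamma> (- t))"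
    by (intro continuous_on_compose2[OF continuous_curve] continuous_intros) auto
  show "continuous_on UNIV (\<lambda>t. - G (- t))"
    by (intro continuous_intros continuous_on_compose2[OF continuous_lag]) auto
  show "continuous_on UNIV (\<lambda>t. - Gi (- t))"
    by (intro continuous_intros continuous_on_compose2[OF continuous_lag_inv]) auto
  show "mono (\<lambda>t. - G (- t))"
    using mono_lag by (simp add: mono_def)
  show "\<exists>p\<in>P. dist (\<gamma> (- a)) p < r/3 \<and> dist (\<gamma> (- b)) p < r/3"
    if "e \<le> b - a" "b - a \<le> 2*e" "dist (\<gamma> (- a)) (\<gamma> (- b)) < \<delta>" for a b
    using return_near_P[where a="- b" and b="- a"] that by (auto simp: dist_commute)
  show "dist p (\<gamma> (- a)) < r/2 \<and> dist p (\<gamma> (- b)) < r/2"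
    if "p \<in> P" "e \<le> b - a" "\<forall>v\<in>{a..b}. dist p (\<gamma> (- v)) \<le> r"
      "dist (\<gamma> (- a)) (\<gamma> (- b)) < \<delta>" for p a b
  proof -
    have "\<forall>v\<in>{- b..- a}. dist p (\<gamma> v) \<le> r"
      using that(3) by (metis atLeastAtMost_iff minus_le_iff minus_minus neg_le_iff_le)
    then show ?thesis
      using return_close_to_P[where p=p and a="- b" and b="- a"] that by (auto simp: dist_commute)
  qed
qed (use e_pos r_pos curve_oscillation shadow lag_apply_inv lag_inv_apply in auto)

lemma lag_segment_in_ball:
  assumes "\<bar>G t0 - t0\<bar> \<le> 2*e"
  shows "\<exists>p. \<forall>u\<in>{min t1 (G t1)..max t1 (G t1)}. dist p (\<gamma> u) \<le> r"
proof (cases "t0 \<le> t1")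
  case True
  then show ?thesis using lag_segment_in_ball_after assms by blast
next
  case False
  interpret reversed: homeo_shadowed_curve "\<lambda>t. \<gamma> (- t)" "\<lambda>t. - G (- t)" P e r \<delta> "\<lambda>t. - Gi (- t)"
    by (fact time_reversal)
  obtain p where p: "\<forall>u\<in>{min (- t1) (- G t1)..max (- t1) (- G t1)}. dist p (\<gamma> (- u)) \<le> r"
    using reversed.lag_segment_in_ball_after[of "- t0" "- t1"] False assms
    by (auto simp: abs_le_iff)
  have "dist p (\<gamma> u) \<le> r" if "u \<in> {min t1 (G t1)..max t1 (G t1)}" for u
    using p[rule_format, of "- u"] that by (auto simp: min_def max_def split: if_splits)
  then show ?thesis by blast
qed

end

locale compact_flow =
  fixes S :: "'a::metric_space set" and phi :: "real \<Rightarrow> 'a \<Rightarrow> 'a"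
  assumes compact: "compact S" and flow: "is_flow S phi"
begin

lemma continuous_flow: "continuous_on (UNIV \<times> S) (\<lambda>(t, x). phi t x)"
  using flow by (simp add: is_flow_def)

lemma flow_in [simp]: "x \<in> S \<Longrightarrow> phi t x \<in> S"
  using flow by (simp add: is_flow_def)

lemma flow_zero [simp]: "x \<in> S \<Longrightarrow> phi 0 x = x"
  using flow by (simp add: is_flow_def)

lemma flow_add: "x \<in> S \<Longrightarrow> phi (s + t) x = phi s (phi t x)"
  using flow by (simp add: is_flow_def)

lemma flow_minus_cancel [simp]: "x \<in> S \<Longrightarrow> phi (- t) (phi t x) = x"
  by (metis flow_add flow_zero add.left_inverse)

lemma tendsto_flow:
  assumes "(tn \<longlongrightarrow> t) F" "(xn \<longlongrightarrow> x) F" "x \<in> S" "eventually (\<lambda>n. xn n \<in> S) F"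
  shows "((\<lambda>n. phi (tn n) (xn n)) \<longlongrightarrow> phi t x) F"
  using continuous_on_tendsto_compose[OF continuous_flow, of "\<lambda>n. (tn n, xn n)" "(t, x)" F] assms
  by (auto intro: tendsto_Pair elim: eventually_mono)

lemma continuous_on_orbit:
  assumes "x \<in> S"
  shows "continuous_on A (\<lambda>t. phi t x)"
proof -
  have "continuous_on UNIV (\<lambda>t. (\<lambda>(t, x). phi t x) (t, x))"
    by (rule continuous_on_compose2[OF continuous_flow]) (use assms in \<open>auto intro!: continuous_intros\<close>)
  then show ?thesis by (auto intro: continuous_on_subset)
qed

lemma uniformly_small_time_displacement:
  assumes "\<eta> > 0"
  shows "\<exists>\<tau>>0. \<forall>w\<in>S. \<forall>u. \<bar>u\<bar> \<le> \<tau> \<longrightarrow> dist (phi u w) w < \<eta>"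
proof -
  have "uniformly_continuous_on ({-1..1} \<times> S) (\<lambda>(t, x). phi t x)"
    using compact by (intro compact_uniformly_continuous compact_Times continuous_on_subset[OF continuous_flow]) auto
  then obtain d where "d > 0" and d: "\<And>v w. v \<in> {-1..1} \<times> S \<Longrightarrow> w \<in> {-1..1} \<times> S \<Longrightarrow>
      dist v w < d \<Longrightarrow> dist ((\<lambda>(t, x). phi t x) v) ((\<lambda>(t, x). phi t x) w) < \<eta>"
    using assms unfolding uniformly_continuous_on_def by metis
  have "dist (phi u w) w < \<eta>" if "w \<in> S" "\<bar>u\<bar> \<le> min (d/2) 1" for u w
    using d[of "(u, w)" "(0, w)"] that \<open>d > 0\<close> by (simp add: dist_Pair_Pair dist_real_def abs_le_iff)
  then show ?thesis
    using \<open>d > 0\<close> by (intro exI[of _ "min (d/2) 1"]) auto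
qed

lemma uniformly_continuous_orbits:
  assumes "\<eta> > 0"
  shows "\<exists>\<tau>>0. \<forall>y\<in>S. \<forall>a b. \<bar>a - b\<bar> \<le> \<tau> \<longrightarrow> dist (phi a y) (phi b y) < \<eta>"
proof -
  obtain \<tau> where "\<tau> > 0" and \<tau>: "\<forall>w\<in>S. \<forall>u. \<bar>u\<bar> \<le> \<tau> \<longrightarrow> dist (phi u w) w < \<eta>"
    using uniformly_small_time_displacement[OF assms] by blast
  have "dist (phi a y) (phi b y) < \<eta>" if "y \<in> S" "\<bar>a - b\<bar> \<le> \<tau>" for y a b
  proof -
    have "phi a y = phi (a - b) (phi b y)"
      using flow_add[OF that(1), of "a - b" b] by simp
    then show ?thesis
      using \<tau> that by simp
  qed
  then show ?thesis
    using \<open>\<tau> > 0\<close> by blast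
qed

lemma diameter_nonpos_imp_eq:
  assumes "diameter S \<le> 0" "x \<in> S" "y \<in> S"
  shows "x = y"
  using diameter_bounded_bound[OF compact_imp_bounded[OF compact] assms(2,3)] assms(1)
  by (metis dist_le_zero_iff order.trans)

definition fixed_point :: "'a \<Rightarrow> bool" where
  "fixed_point q \<longleftrightarrow> (\<forall>t. phi t q = q)"

lemma fixed_point_orbit: "fixed_point q \<Longrightarrow> phi t q = q"
  by (simp add: fixed_point_def)

lemma periodic_orbit_reduce:
  assumes q: "q \<in> S" and "L > 0" and period: "phi L q = q"
  shows "\<exists>v\<in>{0..L}. phi t q = phi v q"
proof -
  have multiple: "phi (real n * L) q = q" for n :: nat
  proof (induction n)
    case (Suc n)
    have "phi (real (Suc n) * L) q = phi (real n * L) (phi L q)"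
      using flow_add[OF q, of "real n * L" L] by (simp add: algebra_simps)
    then show ?case using period Suc by simp
  qed (use q in simp)
  have int_multiple: "phi (of_int k * L) q = q" for k :: int
  proof (cases "k \<ge> 0")
    case True then show ?thesis using multiple[of "nat k"] by simp
  next
    case False
    then show ?thesis
      using multiple[of "nat (-k)"] flow_minus_cancel[OF q, of "real (nat (-k)) * L"] by simp
  qed
  define k where "k = \<lfloor>t / L\<rfloor>"
  have "of_int k \<le> t / L" "t / L < of_int k + 1"
    unfolding k_def by linarith+
  then have "t - of_int k * L \<in> {0..L}"
    using \<open>L > 0\<close> by (auto simp: field_simps)
  moreover have "phi t q = phi (t - of_int k * L) (phi (of_int k * L) q)"
    using flow_add[OF q, of "t - of_int k * L" "of_int k * L"] by simp
  ultimately show ?thesis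
    using int_multiple by auto
qed

abbreviation orbit_segment :: "'a \<Rightarrow> real \<Rightarrow> real \<Rightarrow> 'a set" where
  "orbit_segment z a b \<equiv> (\<lambda>t. phi t z) ` {a..b}"

lemma bounded_orbit_segment: "z \<in> S \<Longrightarrow> bounded (orbit_segment z a b)"
  by (intro compact_imp_bounded compact_continuous_image continuous_on_orbit compact_Icc)

lemma orbit_dist_le_diameter:
  assumes "z \<in> S" "a \<le> b" "x \<in> orbit_segment z a b" "y \<in> orbit_segment z a b"
    and "y \<in> range (\<lambda>t. phi t x)"
  shows "orbit_dist S phi x y \<le> diameter (orbit_segment z a b)"
proof -
  let ?D = "{diameter (orbit_segment z a b) | z a b.
              z \<in> S \<and> a \<le> b \<and> x \<in> orbit_segment z a b \<and> y \<in> orbit_segment z a b}"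
  have "bdd_below ?D"
    by (rule bdd_belowI[of _ 0]) (auto intro!: diameter_ge_0 bounded_orbit_segment)
  then have "Inf ?D \<le> diameter (orbit_segment z a b)"
    using assms by (intro cInf_lower) blast+
  then show ?thesis
    using assms(5) unfolding orbit_dist_def by simp
qed

lemma orbit_dist_less_imp_same_orbit:
  assumes "orbit_dist S phi x y < diameter S"
  shows "y \<in> range (\<lambda>t. phi t x)"
  using assms unfolding orbit_dist_def by (auto split: if_splits)

lemma orbit_dist_less_imp_segment:
  assumes x: "x \<in> S" and less: "orbit_dist S phi x y < \<beta>" and "\<beta> \<le> diameter S"
  obtains z a b where "z \<in> S" "a \<le> b" "x \<in> orbit_segment z a b" "y \<in> orbit_segment z a b"
    "diameter (orbit_segment z a b) < \<beta>"
proof -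
  let ?D = "{diameter (orbit_segment z a b) | z a b.
              z \<in> S \<and> a \<le> b \<and> x \<in> orbit_segment z a b \<and> y \<in> orbit_segment z a b}"
  have "y \<in> range (\<lambda>t. phi t x)"
    using orbit_dist_less_imp_same_orbit less \<open>\<beta> \<le> diameter S\<close> by simp
  then obtain c where c: "y = phi c x" by blast
  have "x \<in> orbit_segment x (min 0 c) (max 0 c)" "y \<in> orbit_segment x (min 0 c) (max 0 c)"
    using x c by (auto intro: image_eqI[where x=0])
  then have "?D \<noteq> {}"
    using x by fastforce
  moreover have "Inf ?D < \<beta>"
    using less c unfolding orbit_dist_def by auto
  ultimately obtain d where "d \<in> ?D" "d < \<beta>"
    by (meson cInf_lessD)
  then show thesis
    using that by blast
qed

definition fixed_points_orbit_isolated :: "real \<Rightarrow> bool" where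
  "fixed_points_orbit_isolated \<delta> \<longleftrightarrow>
     (\<forall>q\<in>S. \<forall>w\<in>S. fixed_point q \<and> (\<forall>t. dist q (phi t w) < \<delta>) \<longrightarrow> w = q)"

lemma expansive_fixed_points_orbit_isolated:
  assumes "expansive_flow S phi"
  shows "\<exists>\<delta>>0. fixed_points_orbit_isolated \<delta>"
proof (cases "diameter S \<le> 0")
  case True
  then show ?thesis
    using diameter_nonpos_imp_eq[OF True] unfolding fixed_points_orbit_isolated_def
    by (intro exI[of _ 1]) auto
next
  case False
  then obtain \<delta> where "\<delta> > 0" and \<delta>: "\<forall>x\<in>S. \<forall>y\<in>S. \<forall>h\<in>incr_homeos.
      (\<forall>t. dist (phi (h t) x) (phi t y) < \<delta>) \<longrightarrow> orbit_dist S phi x y < diameter S"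
    using assms unfolding expansive_flow_def by (meson not_le)
  have "w = q" if "q \<in> S" "w \<in> S" "fixed_point q" "\<forall>t. dist q (phi t w) < \<delta>" for q w
  proof -
    have "\<forall>t. dist (phi t q) (phi t w) < \<delta>"
      using that(3,4) by (simp add: fixed_point_orbit)
    then have "orbit_dist S phi q w < diameter S"
      using \<delta>[rule_format, OF that(1,2) id_in_incr_homeos] by simp
    then obtain c where "w = phi c q"
      using orbit_dist_less_imp_same_orbit by blast
    then show ?thesis
      using that(3) by (simp add: fixed_point_orbit)
  qed
  then show ?thesis
    using \<open>\<delta> > 0\<close> unfolding fixed_points_orbit_isolated_def by blast
qed

lemma kstar_fixed_points_orbit_isolated:
  assumes "kstar_expansive_flow S phi"
  shows "\<exists>\<delta>>0. fixed_points_orbit_isolated \<delta>"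
proof -
  obtain \<delta> where "\<delta> > 0" and \<delta>: "\<forall>x\<in>S. \<forall>y\<in>S. \<forall>h\<in>incr_homeos.
      (\<forall>t. dist (phi (h t) x) (phi t y) < \<delta>) \<longrightarrow> (\<exists>s t0. \<bar>s\<bar> < 1 \<and> phi (h t0) x = phi (t0 + s) y)"
    using assms zero_less_one unfolding kstar_expansive_flow_def by blast
  have "w = q" if q: "q \<in> S" and w: "w \<in> S" and fixed: "fixed_point q"
    and close: "\<forall>t. dist q (phi t w) < \<delta>" for q w
  proof -
    have "\<forall>t. dist (phi t q) (phi t w) < \<delta>"
      using fixed close by (simp add: fixed_point_orbit)
    then obtain s t0 where "phi t0 q = phi (t0 + s) w"
      using \<delta>[rule_format, OF q w id_in_incr_homeos] by blast
    then have "q = phi (t0 + s) w"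
      using fixed_point_orbit[OF fixed] by simp
    then have "phi (- (t0 + s)) q = w"
      using flow_minus_cancel[OF w] by blast
    then show ?thesis
      using fixed_point_orbit[OF fixed] by simp
  qed
  then show ?thesis
    using \<open>\<delta> > 0\<close> unfolding fixed_points_orbit_isolated_def by blast
qed

section \<open>Expansive flows are k*-expansive\<close>

lemma slow_points_near_fixed_points:
  assumes "\<epsilon> > 0" "r > 0"
  shows "\<exists>\<eta>>0. \<forall>w\<in>S. (\<forall>t\<in>{0..\<epsilon>}. dist (phi t w) w \<le> \<eta>) \<longrightarrow>
           (\<exists>q\<in>S. fixed_point q \<and> dist w q < r)"
proof (rule ccontr)
  assume "\<not> ?thesis"
  then have counterexamples: "\<forall>\<eta>. \<eta> \<le> 0 \<or> (\<exists>w\<in>S. (\<forall>t\<in>{0..\<epsilon>}. dist (phi t w) w \<le> \<eta>) \<and>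
               (\<forall>q\<in>S. fixed_point q \<longrightarrow> r \<le> dist w q))"
    by (auto simp: not_less)
  have "\<forall>n. \<exists>w. w \<in> S \<and> (\<forall>t\<in>{0..\<epsilon>}. dist (phi t w) w \<le> inverse (real (Suc n))) \<and>
               (\<forall>q\<in>S. fixed_point q \<longrightarrow> r \<le> dist w q)"
  proof
    fix n
    show "\<exists>w. w \<in> S \<and> (\<forall>t\<in>{0..\<epsilon>}. dist (phi t w) w \<le> inverse (real (Suc n))) \<and>
               (\<forall>q\<in>S. fixed_point q \<longrightarrow> r \<le> dist w q)"
      using spec[OF counterexamples, of "inverse (real (Suc n))"] by (simp add: Bex_def)
  qed
  from choice[OF this] obtain W where W: "\<And>n. W n \<in> S"
    "\<And>n t. t \<in> {0..\<epsilon>} \<Longrightarrow> dist (phi t (W n)) (W n) \<le> inverse (real (Suc n))"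
    "\<And>n q. q \<in> S \<Longrightarrow> fixed_point q \<Longrightarrow> r \<le> dist (W n) q"
    by blast
  obtain l \<sigma> where l: "l \<in> S" "strict_mono \<sigma>" "(W \<circ> \<sigma>) \<longlonglongrightarrow> l"
    using seq_compactE[OF compact_imp_seq_compact[OF compact], of W] W(1) by blast
  have rest: "phi v l = l" if "v \<in> {0..\<epsilon>}" for v
  proof (rule LIMSEQ_eq_if_dist_le_inverse[OF _ l(3) l(2)])
    show "(\<lambda>n. phi v ((W \<circ> \<sigma>) n)) \<longlonglongrightarrow> phi v l"
      by (rule tendsto_flow[OF tendsto_const l(3) l(1)]) (simp add: W(1))
    show "dist (phi v ((W \<circ> \<sigma>) n)) ((W \<circ> \<sigma>) n) \<le> inverse (real (Suc (\<sigma> n)))" for n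
      using W(2)[OF that] by simp
  qed
  have "fixed_point l"
    unfolding fixed_point_def
  proof
    fix t
    obtain v where "v \<in> {0..\<epsilon>}" "phi t l = phi v l"
      using periodic_orbit_reduce[OF l(1) \<open>\<epsilon> > 0\<close> rest] \<open>\<epsilon> > 0\<close> by force
    then show "phi t l = l" using rest by simp
  qed
  then have "\<forall>n. r \<le> dist ((W \<circ> \<sigma>) n) l"
    using W(3) l(1) by simp
  moreover have "(\<lambda>n. dist ((W \<circ> \<sigma>) n) l) \<longlonglongrightarrow> 0"
    using l(3) tendsto_dist_iff by blast
  ultimately have "r \<le> 0"
    by (intro LIMSEQ_le_const) blast+
  then show False
    using \<open>r > 0\<close> by simp
qed

lemma orbit_near_fixed_points_imp_fixed:
  assumes iso: "fixed_points_orbit_isolated \<delta>" and "\<delta> > 0" and y: "y \<in> S"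
    and near: "\<And>t. \<exists>q\<in>S. fixed_point q \<and> dist (phi t y) q < \<delta>/4"
  shows "fixed_point y"
proof -
  obtain q0 where q0: "q0 \<in> S" "fixed_point q0" "dist y q0 < \<delta>/4"
    using near[of 0] y by auto
  have separated: "\<delta> \<le> dist q q0" if "q \<in> S" "fixed_point q" "q \<noteq> q0" for q
  proof (rule ccontr)
    assume "\<not> ?thesis"
    then have "\<forall>t. dist q (phi t q0) < \<delta>"
      using q0(2) by (simp add: fixed_point_orbit)
    then show False
      using iso that q0 unfolding fixed_points_orbit_isolated_def by blast
  qed
  let ?U = "{t. dist (phi t y) q0 < \<delta>/4}" and ?V = "{t. \<delta>/2 < dist (phi t y) q0}"
  have cont: "continuous_on UNIV (\<lambda>t. dist (phi t y) q0)"
    by (intro continuous_intros continuous_on_orbit y)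
  have "open ?U"
    by (rule open_Collect_less[OF cont]) (intro continuous_intros)
  moreover have "open ?V"
    by (rule open_Collect_less[OF _ cont]) (intro continuous_intros)
  moreover have "UNIV \<subseteq> ?U \<union> ?V"
  proof
    fix t :: real
    obtain q where q: "q \<in> S" "fixed_point q" "dist (phi t y) q < \<delta>/4"
      using near by blast
    show "t \<in> ?U \<union> ?V"
    proof (cases "q = q0")
      case False
      then have "\<delta> \<le> dist q q0" using separated q by blast
      then show ?thesis
        using q(3) dist_triangle[of q q0 "phi t y"] \<open>\<delta> > 0\<close> by (simp add: dist_commute)
    qed (use q in simp)
  qed
  moreover have "?U \<inter> ?V = {}" "0 \<in> ?U"
    using \<open>\<delta> > 0\<close> q0 y by auto
  ultimately have "?V = {}"
    using connectedD[OF connected_UNIV, of ?U ?V] by auto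
  with \<open>UNIV \<subseteq> ?U \<union> ?V\<close> have U: "dist (phi t y) q0 < \<delta>/4" for t
    by blast
  have "dist q0 (phi t y) < \<delta>" for t
    using U[of t] \<open>\<delta> > 0\<close> by (simp add: dist_commute)
  then have "y = q0"
    using iso q0 y unfolding fixed_points_orbit_isolated_def by blast
  with q0 show ?thesis by simp
qed

lemma expansive_uniform_motion:
  assumes exp: "expansive_flow S phi" and "\<epsilon> > 0"
  shows "\<exists>\<eta>>0. \<forall>y\<in>S. \<not> fixed_point y \<longrightarrow>
           (\<exists>a b. a \<le> b \<and> b \<le> a + \<epsilon> \<and> \<eta> < dist (phi a y) (phi b y))"
proof -
  obtain \<delta> where "\<delta> > 0" and iso: "fixed_points_orbit_isolated \<delta>"
    using expansive_fixed_points_orbit_isolated[OF exp] by blast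
  obtain \<eta> where "\<eta> > 0" and slow: "\<forall>w\<in>S. (\<forall>t\<in>{0..\<epsilon>}. dist (phi t w) w \<le> \<eta>) \<longrightarrow>
      (\<exists>q\<in>S. fixed_point q \<and> dist w q < \<delta>/4)"
    using slow_points_near_fixed_points[OF \<open>\<epsilon> > 0\<close>, of "\<delta>/4"] \<open>\<delta> > 0\<close> by auto
  have "\<exists>a b. a \<le> b \<and> b \<le> a + \<epsilon> \<and> \<eta> < dist (phi a y) (phi b y)"
    if y: "y \<in> S" and moving: "\<not> fixed_point y" for y
  proof (rule ccontr)
    assume none: "\<not> ?thesis"
    have "dist (phi t y) (phi (u + t) y) \<le> \<eta>" if "u \<in> {0..\<epsilon>}" for t u
    proof -
      have "t \<le> u + t" "u + t \<le> t + \<epsilon>"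
        using that by auto
      then show ?thesis
        using none not_less by blast
    qed
    then have "dist (phi u (phi t y)) (phi t y) \<le> \<eta>" if "u \<in> {0..\<epsilon>}" for t u
      using that flow_add[OF y, of u t] by (metis dist_commute)
    then have "\<exists>q\<in>S. fixed_point q \<and> dist (phi t y) q < \<delta>/4" for t
      using slow y by simp
    then show False
      using orbit_near_fixed_points_imp_fixed[OF iso \<open>\<delta> > 0\<close> y] moving by blast
  qed
  then show ?thesis
    using \<open>\<eta> > 0\<close> by blast
qed

lemma small_segment_time_shift:
  assumes y: "y \<in> S" and z: "z \<in> S"
    and x': "x' \<in> orbit_segment z a' b'" and y': "phi u y \<in> orbit_segment z a' b'"
    and small: "diameter (orbit_segment z a' b') < \<rho>"
    and "a \<le> u" "u \<le> b" "b \<le> a + \<epsilon>"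
    and far: "\<rho> \<le> dist (phi u y) (phi a y)" "\<rho> \<le> dist (phi u y) (phi b y)"
  shows "\<exists>s. \<bar>s\<bar> < \<epsilon> \<and> x' = phi (u + s) y"
proof -
  obtain p q where pq: "p \<in> {a'..b'}" "q \<in> {a'..b'}" "x' = phi p z" "phi u y = phi q z"
    using x' y' by auto
  have shift: "phi (v + q) z = phi (v + u) y" for v
    using flow_add[OF y, of v u] flow_add[OF z, of v q] pq(4) by simp
  have not_in_segment: "v + q \<notin> {a'..b'}" if "v + u \<in> {a, b}" for v
  proof
    assume "v + q \<in> {a'..b'}"
    then have "dist (phi u y) (phi (v + u) y) < \<rho>"
      using diameter_bounded_bound[OF bounded_orbit_segment[OF z] y'] small shift[of v]
      by (metis (no_types, lifting) image_eqI order.strict_trans1)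
    then show False
      using that far by auto
  qed
  have "\<bar>p - q\<bar> < \<epsilon>"
  proof (rule ccontr)
    assume "\<not> \<bar>p - q\<bar> < \<epsilon>"
    then consider "\<epsilon> \<le> p - q" | "p - q \<le> - \<epsilon>" by linarith
    then show False
    proof cases
      case 1
      then have "(b - u) + q \<in> {a'..b'}"
        using pq \<open>a \<le> u\<close> \<open>u \<le> b\<close> \<open>b \<le> a + \<epsilon>\<close> by auto
      then show False using not_in_segment[of "b - u"] by simp
    next
      case 2
      then have "(a - u) + q \<in> {a'..b'}"
        using pq \<open>a \<le> u\<close> \<open>u \<le> b\<close> \<open>b \<le> a + \<epsilon>\<close> by auto
      then show False using not_in_segment[of "a - u"] by simp
    qed
  qed
  moreover have "x' = phi (u + (p - q)) y"
    using shift[of "p - q"] pq(3) by (simp add: add.commute)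
  ultimately show ?thesis by blast
qed

lemma shadow_recentre:
  assumes x: "x \<in> S" and y: "y \<in> S" and "\<forall>t. dist (phi (h t) x) (phi t y) < \<delta>"
  shows "\<forall>t. dist (phi (h (t + u) - h u) (phi (h u) x)) (phi t (phi u y)) < \<delta>"
proof
  fix t
  have "phi (h (t + u) - h u) (phi (h u) x) = phi (h (t + u)) x"
    using flow_add[OF x, of "h (t + u) - h u" "h u"] by simp
  moreover have "phi t (phi u y) = phi (t + u) y"
    using flow_add[OF y] by simp
  ultimately show "dist (phi (h (t + u) - h u) (phi (h u) x)) (phi t (phi u y)) < \<delta>"
    using assms(3) by simp
qed

lemma separated_time_shift:
  assumes x: "x \<in> S" and y: "y \<in> S" and h: "h \<in> incr_homeos"
    and shadow: "\<forall>t. dist (phi (h t) x) (phi t y) < \<delta>"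
    and orbit_close: "\<forall>x\<in>S. \<forall>y\<in>S. \<forall>h\<in>incr_homeos.
        (\<forall>t. dist (phi (h t) x) (phi t y) < \<delta>) \<longrightarrow> orbit_dist S phi x y < \<beta>"
    and "\<beta> \<le> diameter S" "\<beta> \<le> \<eta>/2" "\<eta> > 0"
    and ab: "a \<le> b" "b \<le> a + \<epsilon>" "\<eta> < dist (phi a y) (phi b y)"
  shows "\<exists>s t0. \<bar>s\<bar> < \<epsilon> \<and> phi (h t0) x = phi (t0 + s) y"
proof -
  have "continuous_on {a..b} (\<lambda>v. dist (phi a y) (phi v y))"
    by (intro continuous_intros continuous_on_orbit y)
  then obtain u where u: "a \<le> u" "u \<le> b" "dist (phi a y) (phi u y) = \<eta>/2"
    using IVT'[of "\<lambda>v. dist (phi a y) (phi v y)" a "\<eta>/2" b] ab \<open>\<eta> > 0\<close> by auto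
  have "\<eta>/2 < dist (phi u y) (phi b y)"
    using dist_triangle[of "phi a y" "phi b y" "phi u y"] u(3) ab(3) by linarith
  have "orbit_dist S phi (phi (h u) x) (phi u y) < \<beta>"
    using orbit_close[rule_format, OF flow_in[OF x] flow_in[OF y] incr_homeos_recentre[OF h]
        shadow_recentre[OF x y shadow, rule_format]] .
  then obtain z a' b' where z: "z \<in> S" "a' \<le> b'" "phi (h u) x \<in> orbit_segment z a' b'"
    "phi u y \<in> orbit_segment z a' b'" "diameter (orbit_segment z a' b') < \<beta>"
    by (rule orbit_dist_less_imp_segment[OF flow_in[OF x] _ \<open>\<beta> \<le> diameter S\<close>])
  have "diameter (orbit_segment z a' b') < \<eta>/2"
    using z(5) \<open>\<beta> \<le> \<eta>/2\<close> by linarith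
  moreover have "\<eta>/2 \<le> dist (phi u y) (phi a y)"
    using u(3) by (simp add: dist_commute)
  moreover have "\<eta>/2 \<le> dist (phi u y) (phi b y)"
    using \<open>\<eta>/2 < dist (phi u y) (phi b y)\<close> by simp
  ultimately have "\<exists>s. \<bar>s\<bar> < \<epsilon> \<and> phi (h u) x = phi (u + s) y"
    by (rule small_segment_time_shift[OF y z(1,3,4) _ u(1,2) ab(2)])
  then show ?thesis
    by blast
qed

lemma expansive_imp_kstar_expansive:
  assumes exp: "expansive_flow S phi"
  shows "kstar_expansive_flow S phi"
  unfolding kstar_expansive_flow_def
proof (intro allI impI)
  fix \<epsilon> :: real assume "\<epsilon> > 0"
  show "\<exists>\<delta>>0. \<forall>x\<in>S. \<forall>y\<in>S. \<forall>h\<in>incr_homeos. (\<forall>t. dist (phi (h t) x) (phi t y) < \<delta>) \<longrightarrow>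
          (\<exists>s t0. \<bar>s\<bar> < \<epsilon> \<and> phi (h t0) x = phi (t0 + s) y)"
  proof (cases "diameter S \<le> 0")
    case True
    have "\<exists>s t0. \<bar>s\<bar> < \<epsilon> \<and> phi (h t0) x = phi (t0 + s) y"
      if "x \<in> S" "y \<in> S" "h \<in> incr_homeos" for x y h
    proof -
      have "\<bar>0\<bar> < \<epsilon> \<and> phi (h 0) x = phi (0 + 0) y"
        using \<open>\<epsilon> > 0\<close> incr_homeos_zero[OF that(3)] diameter_nonpos_imp_eq[OF True that(1,2)]
        by simp
      then show ?thesis by blast
    qed
    then show ?thesis
      by (intro exI[of _ 1]) auto
  next
    case False
    obtain \<eta> where "\<eta> > 0" and motion: "\<forall>y\<in>S. \<not> fixed_point y \<longrightarrow>
        (\<exists>a b. a \<le> b \<and> b \<le> a + \<epsilon> \<and> \<eta> < dist (phi a y) (phi b y))"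
      using expansive_uniform_motion[OF exp \<open>\<epsilon> > 0\<close>] by blast
    define \<beta> where "\<beta> = min (\<eta>/2) (diameter S)"
    have "\<beta> > 0" "\<beta> \<le> diameter S" "\<beta> \<le> \<eta>/2"
      using \<open>\<eta> > 0\<close> False by (auto simp: \<beta>_def)
    then obtain \<delta> where "\<delta> > 0" and \<delta>: "\<forall>x\<in>S. \<forall>y\<in>S. \<forall>h\<in>incr_homeos.
        (\<forall>t. dist (phi (h t) x) (phi t y) < \<delta>) \<longrightarrow> orbit_dist S phi x y < \<beta>"
      using exp unfolding expansive_flow_def by blast
    have "\<exists>s t0. \<bar>s\<bar> < \<epsilon> \<and> phi (h t0) x = phi (t0 + s) y"
      if x: "x \<in> S" and y: "y \<in> S" and h: "h \<in> incr_homeos"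
        and shadow: "\<forall>t. dist (phi (h t) x) (phi t y) < \<delta>" for x y h
    proof (cases "fixed_point y")
      case True
      have "orbit_dist S phi x y < diameter S"
        using \<delta>[rule_format, OF x y h shadow[rule_format]] \<open>\<beta> \<le> diameter S\<close> by simp
      then obtain c where "y = phi c x"
        using orbit_dist_less_imp_same_orbit by blast
      then have "x = y"
        using flow_minus_cancel[OF x, of c] True by (simp add: fixed_point_orbit)
      then show ?thesis
        using \<open>\<epsilon> > 0\<close> incr_homeos_zero[OF h] by (intro exI[of _ 0]) auto
    next
      case False
      then obtain a b where "a \<le> b" "b \<le> a + \<epsilon>" "\<eta> < dist (phi a y) (phi b y)"
        using motion y by blast
      then show ?thesis
        using separated_time_shift[OF x y h shadow \<delta> \<open>\<beta> \<le> diameter S\<close> \<open>\<beta> \<le> \<eta>/2\<close>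
            \<open>\<eta> > 0\<close>] by blast
    qed
    then show ?thesis
      using \<open>\<delta> > 0\<close> by blast
  qed
qed

section \<open>k*-expansive flows are expansive\<close>

lemma short_period_orbit_close:
  assumes "\<eta> > 0"
  obtains \<tau> where "\<tau> > 0"
    "\<And>w u t. w \<in> S \<Longrightarrow> 0 < u \<Longrightarrow> u \<le> \<tau> \<Longrightarrow> phi u w = w \<Longrightarrow> dist (phi t w) w < \<eta>"
proof -
  obtain \<tau> where "\<tau> > 0" and \<tau>: "\<forall>w\<in>S. \<forall>u. \<bar>u\<bar> \<le> \<tau> \<longrightarrow> dist (phi u w) w < \<eta>"
    using uniformly_small_time_displacement[OF assms] by blast
  have "dist (phi t w) w < \<eta>"
    if w: "w \<in> S" and u: "0 < u" "u \<le> \<tau>" and period: "phi u w = w" for w u t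
  proof -
    obtain v where "v \<in> {0..u}" "phi t w = phi v w"
      using periodic_orbit_reduce[OF w u(1) period] by blast
    then show ?thesis
      using \<tau> w u by auto
  qed
  with \<open>\<tau> > 0\<close> show thesis
    using that by blast
qed

lemma short_periods_orbits_shrink:
  assumes W: "\<And>n. W n \<in> S" and U: "\<And>n. 0 < U n" "U \<longlonglongrightarrow> 0"
    and period: "\<And>n. phi (U n) (W n) = W n" and "\<eta> > 0"
  shows "\<exists>N. \<forall>n\<ge>N. \<forall>t. dist (phi t (W n)) (W n) < \<eta>"
proof -
  obtain \<tau> where "\<tau> > 0" and \<tau>: "\<And>w u t. w \<in> S \<Longrightarrow> 0 < u \<Longrightarrow> u \<le> \<tau> \<Longrightarrow> phi u w = w \<Longrightarrow>
      dist (phi t w) w < \<eta>"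
    using short_period_orbit_close[OF \<open>\<eta> > 0\<close>] by blast
  obtain N where "\<forall>n\<ge>N. U n < \<tau>"
    using order_tendstoD(2)[OF U(2) \<open>\<tau> > 0\<close>] by (auto simp: eventually_sequentially)
  then show ?thesis
    using \<tau> W U(1) period less_imp_le by blast
qed

lemma kstar_no_short_periods:
  assumes ks: "kstar_expansive_flow S phi"
  shows "\<exists>\<tau>>0. \<forall>w\<in>S. \<forall>u. 0 < u \<and> u < \<tau> \<and> phi u w = w \<longrightarrow> fixed_point w"
proof (rule ccontr)
  assume "\<not> ?thesis"
  then have counterexamples:
    "\<forall>\<tau>. \<tau> \<le> 0 \<or> (\<exists>w\<in>S. \<exists>u. 0 < u \<and> u < \<tau> \<and> phi u w = w \<and> \<not> fixed_point w)"
    by (auto simp: not_less)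
  have "\<forall>n. \<exists>w u. w \<in> S \<and> 0 < u \<and> u < inverse (real (Suc n)) \<and> phi u w = w \<and> \<not> fixed_point w"
  proof
    fix n
    show "\<exists>w u. w \<in> S \<and> 0 < u \<and> u < inverse (real (Suc n)) \<and> phi u w = w \<and> \<not> fixed_point w"
      using spec[OF counterexamples, of "inverse (real (Suc n))"] by auto
  qed
  from choice[OF this] obtain W where "\<forall>n. \<exists>u. W n \<in> S \<and> 0 < u \<and> u < inverse (real (Suc n)) \<and>
      phi u (W n) = W n \<and> \<not> fixed_point (W n)"
    by blast
  from choice[OF this] obtain U where W: "\<And>n. W n \<in> S" "\<And>n. 0 < U n"
    "\<And>n. U n < inverse (real (Suc n))" "\<And>n. phi (U n) (W n) = W n" "\<And>n. \<not> fixed_point (W n)"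
    by blast
  have "\<forall>n. 0 \<le> U n" "\<forall>n. U n \<le> inverse (real (Suc n))"
    using W(2,3) less_imp_le by blast+
  then have "U \<longlonglongrightarrow> 0"
    by (intro tendsto_sandwich[OF _ _ tendsto_const LIMSEQ_inverse_real_of_nat] always_eventually)
  note eventually_close = short_periods_orbits_shrink[OF W(1,2) this W(4)]
  obtain l \<sigma> where l: "l \<in> S" "strict_mono \<sigma>" "(W \<circ> \<sigma>) \<longlonglongrightarrow> l"
    using seq_compactE[OF compact_imp_seq_compact[OF compact], of W] W(1) by blast
  have "fixed_point l"
    unfolding fixed_point_def
  proof
    fix t
    have lim: "(\<lambda>n. dist (phi t ((W \<circ> \<sigma>) n)) ((W \<circ> \<sigma>) n)) \<longlonglongrightarrow> dist (phi t l) l"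
      by (intro tendsto_intros tendsto_flow[OF tendsto_const l(3) l(1)] l(3)) (simp add: W(1))
    have "dist (phi t l) l \<le> \<eta>" if \<eta>: "\<eta> > 0" for \<eta>
    proof (rule LIMSEQ_le_const2[OF lim])
      obtain N where "\<forall>n\<ge>N. \<forall>t. dist (phi t (W n)) (W n) < \<eta>"
        using eventually_close[OF \<eta>] by blast
      then have "\<forall>n\<ge>N. dist (phi t ((W \<circ> \<sigma>) n)) ((W \<circ> \<sigma>) n) \<le> \<eta>"
        using seq_suble[OF l(2)] by (simp add: le_trans less_imp_le)
      then show "\<exists>N. \<forall>n\<ge>N. dist (phi t ((W \<circ> \<sigma>) n)) ((W \<circ> \<sigma>) n) \<le> \<eta>" ..
    qed
    then have "dist (phi t l) l \<le> 0"
      by (rule dense_ge)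
    then show "phi t l = l"
      by simp
  qed
  obtain \<delta> where "\<delta> > 0" and iso: "fixed_points_orbit_isolated \<delta>"
    using kstar_fixed_points_orbit_isolated[OF ks] by blast
  obtain N1 where N1: "\<forall>n\<ge>N1. \<forall>t. dist (phi t (W n)) (W n) < \<delta>/2"
    using eventually_close \<open>\<delta> > 0\<close> half_gt_zero by blast
  obtain N2 where N2: "\<forall>n\<ge>N2. dist ((W \<circ> \<sigma>) n) l < \<delta>/2"
    using l(3) \<open>\<delta> > 0\<close> half_gt_zero unfolding lim_sequentially by blast
  define n where "n = max N1 N2"
  have "N1 \<le> \<sigma> n"
    using seq_suble[OF l(2), of n] unfolding n_def by linarith
  then have "dist (phi t (W (\<sigma> n))) (W (\<sigma> n)) < \<delta>/2" for t
    using N1 by blast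
  moreover have "dist (W (\<sigma> n)) l < \<delta>/2"
    using N2 unfolding n_def by simp
  ultimately have "dist l (phi t (W (\<sigma> n))) < \<delta>" for t
    using dist_triangle[of l "phi t (W (\<sigma> n))" "W (\<sigma> n)"]
    by (smt (verit, best) dist_commute field_sum_of_halves)
  then have "W (\<sigma> n) = l"
    using iso l(1) W(1) \<open>fixed_point l\<close> unfolding fixed_points_orbit_isolated_def by blast
  then show False
    using W(5) \<open>fixed_point l\<close> by metis
qed

lemma short_return_near_fixed_point:
  assumes no_short: "\<forall>w\<in>S. \<forall>u. 0 < u \<and> u < \<tau> \<and> phi u w = w \<longrightarrow> fixed_point w"
    and "e > 0" "2*e < \<tau>" "\<rho> > 0"
  shows "\<exists>\<delta>>0. \<forall>w\<in>S. \<forall>u\<in>{e..2*e}. dist (phi u w) w < \<delta> \<longrightarrow>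
           (\<exists>p\<in>S. fixed_point p \<and> dist w p < \<rho>)"
proof (rule ccontr)
  assume "\<not> ?thesis"
  then have counterexamples: "\<forall>\<delta>. \<delta> \<le> 0 \<or> (\<exists>w\<in>S. \<exists>u\<in>{e..2*e}. dist (phi u w) w < \<delta> \<and>
      (\<forall>p\<in>S. fixed_point p \<longrightarrow> \<rho> \<le> dist w p))"
    by (auto simp: not_less)
  have "\<forall>n. \<exists>w u. w \<in> S \<and> u \<in> {e..2*e} \<and> dist (phi u w) w < inverse (real (Suc n)) \<and>
      (\<forall>p\<in>S. fixed_point p \<longrightarrow> \<rho> \<le> dist w p)"
  proof
    fix n
    show "\<exists>w u. w \<in> S \<and> u \<in> {e..2*e} \<and> dist (phi u w) w < inverse (real (Suc n)) \<and>
        (\<forall>p\<in>S. fixed_point p \<longrightarrow> \<rho> \<le> dist w p)"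
      using spec[OF counterexamples, of "inverse (real (Suc n))"] by (simp add: Bex_def) blast
  qed
  from choice[OF this] obtain W where "\<forall>n. \<exists>u. W n \<in> S \<and> u \<in> {e..2*e} \<and>
      dist (phi u (W n)) (W n) < inverse (real (Suc n)) \<and> (\<forall>p\<in>S. fixed_point p \<longrightarrow> \<rho> \<le> dist (W n) p)"
    by blast
  from choice[OF this] obtain U where W: "\<And>n. W n \<in> S" "\<And>n. U n \<in> {e..2*e}"
    "\<And>n. dist (phi (U n) (W n)) (W n) < inverse (real (Suc n))"
    "\<And>n p. p \<in> S \<Longrightarrow> fixed_point p \<Longrightarrow> \<rho> \<le> dist (W n) p"
    by blast
  have "seq_compact (S \<times> {e..2*e})"
    using compact by (intro compact_imp_seq_compact compact_Times compact_Icc)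
  moreover have "\<forall>n. (W n, U n) \<in> S \<times> {e..2*e}"
    using W(1,2) by simp
  ultimately obtain lv \<sigma> where lv: "lv \<in> S \<times> {e..2*e}" "strict_mono \<sigma>"
      "((\<lambda>n. (W n, U n)) \<circ> \<sigma>) \<longlonglongrightarrow> lv"
    by (rule seq_compactE)
  obtain l v where "lv = (l, v)" by fastforce
  with lv have l: "l \<in> S" "v \<in> {e..2*e}" "(W \<circ> \<sigma>) \<longlonglongrightarrow> l" "(U \<circ> \<sigma>) \<longlonglongrightarrow> v"
    using tendsto_fst[OF lv(3)] tendsto_snd[OF lv(3)] by (auto simp: o_def)
  have "phi v l = l"
  proof (rule LIMSEQ_eq_if_dist_le_inverse[OF _ l(3) lv(2)])
    show "(\<lambda>n. phi ((U \<circ> \<sigma>) n) ((W \<circ> \<sigma>) n)) \<longlonglongrightarrow> phi v l"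
      by (rule tendsto_flow[OF l(4) l(3) l(1)]) (simp add: W(1))
    show "dist (phi ((U \<circ> \<sigma>) n) ((W \<circ> \<sigma>) n)) ((W \<circ> \<sigma>) n) \<le> inverse (real (Suc (\<sigma> n)))" for n
      using W(3)[of "\<sigma> n"] by simp
  qed
  moreover have "0 < v" "v < \<tau>"
    using l(2) assms(2,3) by auto
  ultimately have "fixed_point l"
    using no_short l(1) by blast
  then have "\<forall>n. \<rho> \<le> dist ((W \<circ> \<sigma>) n) l"
    using W(4) l(1) by simp
  moreover have "(\<lambda>n. dist ((W \<circ> \<sigma>) n) l) \<longlonglongrightarrow> 0"
    using l(3) tendsto_dist_iff by blast
  ultimately have "\<rho> \<le> 0"
    by (intro LIMSEQ_le_const) blast+
  then show False
    using \<open>\<rho> > 0\<close> by simp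
qed

lemma limit_orbit_in_cball_bounded_times:
  assumes P: "P \<longlonglongrightarrow> p" and W: "W \<longlonglongrightarrow> l" "l \<in> S" "\<And>n. W n \<in> S"
    and L: "L \<longlonglongrightarrow> L0" "\<And>n. e \<le> L n" "e > 0"
    and return: "(\<lambda>n. phi (L n) (W n)) \<longlonglongrightarrow> l"
    and stay: "\<And>n v. v \<in> {0..L n} \<Longrightarrow> dist (P n) (phi v (W n)) \<le> r"
  shows "dist p (phi t l) \<le> r"
proof -
  have "e \<le> L0"
    by (rule LIMSEQ_le_const[OF L(1)]) (use L(2) in auto)
  have "(\<lambda>n. phi (L n) (W n)) \<longlonglongrightarrow> phi L0 l"
    by (rule tendsto_flow[OF L(1) W(1,2)]) (simp add: W(3))
  then have period: "phi L0 l = l"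
    using return LIMSEQ_unique by blast
  have segment: "dist p (phi v l) \<le> r" if v: "v \<in> {0..L0}" for v
  proof -
    have "(\<lambda>n. phi (min v (L n)) (W n)) \<longlonglongrightarrow> phi (min v L0) l"
      by (rule tendsto_flow[OF _ W(1,2)]) (auto intro: tendsto_intros L(1) simp: W(3))
    then have "(\<lambda>n. dist (P n) (phi (min v (L n)) (W n))) \<longlonglongrightarrow> dist p (phi v l)"
      using v by (intro tendsto_intros P) auto
    moreover have "min v (L n) \<in> {0..L n}" for n
      using v L(2)[of n] L(3) by auto
    ultimately show ?thesis
      using stay by (intro LIMSEQ_le_const2) auto
  qed
  have "L0 > 0"
    using \<open>e \<le> L0\<close> L(3) by simp
  then obtain v where "v \<in> {0..L0}" "phi t l = phi v l"
    using periodic_orbit_reduce[OF W(2) _ period] by blast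
  then show ?thesis
    using segment by simp
qed

lemma limit_orbit_in_cball_unbounded_times:
  assumes P: "P \<longlonglongrightarrow> p" and W: "W \<longlonglongrightarrow> l" "l \<in> S" "\<And>n. W n \<in> S"
    and L: "\<And>T. \<exists>N. \<forall>n\<ge>N. T \<le> L n"
    and return: "(\<lambda>n. phi (L n) (W n)) \<longlonglongrightarrow> l"
    and stay: "\<And>n v. v \<in> {0..L n} \<Longrightarrow> dist (P n) (phi v (W n)) \<le> r"
  shows "dist p (phi t l) \<le> r"
proof (cases "0 \<le> t")
  case True
  have "(\<lambda>n. dist (P n) (phi t (W n))) \<longlonglongrightarrow> dist p (phi t l)"
    by (intro tendsto_intros P tendsto_flow[OF tendsto_const W(1,2)]) (simp add: W(3))
  moreover obtain N where "\<forall>n\<ge>N. t \<le> L n"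
    using L by blast
  ultimately show ?thesis
    using stay True by (intro LIMSEQ_le_const2) auto
next
  case False
  have "(\<lambda>n. dist (P n) (phi t (phi (L n) (W n)))) \<longlonglongrightarrow> dist p (phi t l)"
    by (intro tendsto_intros P tendsto_flow[OF tendsto_const return W(2)]) (simp add: W(3))
  moreover have "phi t (phi (L n) (W n)) = phi (t + L n) (W n)" for n
    using flow_add[OF W(3)] by simp
  moreover obtain N where "\<forall>n\<ge>N. - t \<le> L n"
    using L by blast
  then have "\<forall>n\<ge>N. dist (P n) (phi (t + L n) (W n)) \<le> r"
    using False by (intro allI impI stay) auto
  ultimately show ?thesis
    by (intro LIMSEQ_le_const2) auto
qed

lemma limit_orbit_in_cball:
  assumes P: "P \<longlonglongrightarrow> p" and W: "W \<longlonglongrightarrow> l" "l \<in> S" "\<And>n. W n \<in> S"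
    and L: "monoseq L" "\<And>n. e \<le> L n" "e > 0"
    and return: "(\<lambda>n. phi (L n) (W n)) \<longlonglongrightarrow> l"
    and stay: "\<And>n v. v \<in> {0..L n} \<Longrightarrow> dist (P n) (phi v (W n)) \<le> r"
  shows "dist p (phi t l) \<le> r"
proof (cases "bdd_above (range L)")
  case True
  have "norm (L n) \<le> Sup (range L)" for n
    using cSup_upper[OF rangeI True, of n] L(2)[of n] L(3) by simp
  then have "Bseq L"
    by (rule BseqI')
  then obtain L0 where "L \<longlonglongrightarrow> L0"
    using Bseq_monoseq_convergent[OF _ L(1)] convergentD by blast
  then show ?thesis
    using limit_orbit_in_cball_bounded_times[OF P W] L(2,3) return stay by blast
next
  case False
  then show ?thesis
    by (rule limit_orbit_in_cball_unbounded_times[OF P W monoseq_unbounded_eventually_ge[OF L(1)]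
          return stay])
qed

lemma fixed_point_limit:
  assumes "P \<longlonglongrightarrow> p" "p \<in> S" "\<And>n. P n \<in> S" "\<And>n. fixed_point (P n)"
  shows "fixed_point p"
  unfolding fixed_point_def
proof
  fix t
  have "(\<lambda>n. phi t (P n)) \<longlonglongrightarrow> phi t p"
    by (rule tendsto_flow[OF tendsto_const assms(1,2)]) (simp add: assms(3))
  moreover have "(\<lambda>n. phi t (P n)) = P"
    using assms(4) by (simp add: fixed_point_orbit)
  ultimately show "phi t p = p"
    using assms(1) LIMSEQ_unique by metis
qed

lemma convergent_pair_monotone_subseq:
  fixes L :: "nat \<Rightarrow> real"
  assumes "\<And>n. P n \<in> S" "\<And>n. W n \<in> S"
  obtains \<sigma> p l where "strict_mono \<sigma>" "p \<in> S" "l \<in> S" "(P \<circ> \<sigma>) \<longlonglongrightarrow> p" "(W \<circ> \<sigma>) \<longlonglongrightarrow> l"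
    "monoseq (L \<circ> \<sigma>)"
proof -
  have "seq_compact (S \<times> S)"
    using compact by (intro compact_imp_seq_compact compact_Times)
  moreover have "\<forall>n. (P n, W n) \<in> S \<times> S"
    using assms by simp
  ultimately obtain pl \<sigma>\<^sub>1 where pl: "pl \<in> S \<times> S" "strict_mono \<sigma>\<^sub>1"
      "((\<lambda>n. (P n, W n)) \<circ> \<sigma>\<^sub>1) \<longlonglongrightarrow> pl"
    by (rule seq_compactE)
  obtain p l where "pl = (p, l)" by fastforce
  with pl have p: "p \<in> S" "l \<in> S" "(P \<circ> \<sigma>\<^sub>1) \<longlonglongrightarrow> p" "(W \<circ> \<sigma>\<^sub>1) \<longlonglongrightarrow> l"
    using tendsto_fst[OF pl(3)] tendsto_snd[OF pl(3)] by (auto simp: o_def)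
  obtain \<sigma>\<^sub>2 where \<sigma>\<^sub>2: "strict_mono \<sigma>\<^sub>2" "monoseq (L \<circ> \<sigma>\<^sub>1 \<circ> \<sigma>\<^sub>2)"
    using seq_monosub[of "L \<circ> \<sigma>\<^sub>1"] by (auto simp: o_def)
  show thesis
  proof (rule that[of "\<sigma>\<^sub>1 \<circ> \<sigma>\<^sub>2"])
    show "strict_mono (\<sigma>\<^sub>1 \<circ> \<sigma>\<^sub>2)"
      using pl(2) \<sigma>\<^sub>2(1) by (rule strict_mono_o)
    show "(P \<circ> (\<sigma>\<^sub>1 \<circ> \<sigma>\<^sub>2)) \<longlonglongrightarrow> p" "(W \<circ> (\<sigma>\<^sub>1 \<circ> \<sigma>\<^sub>2)) \<longlonglongrightarrow> l"
      using LIMSEQ_subseq_LIMSEQ[OF p(3) \<sigma>\<^sub>2(1)] LIMSEQ_subseq_LIMSEQ[OF p(4) \<sigma>\<^sub>2(1)]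
      by (simp_all add: o_assoc)
    show "monoseq (L \<circ> (\<sigma>\<^sub>1 \<circ> \<sigma>\<^sub>2))"
      using \<sigma>\<^sub>2(2) by (simp add: o_assoc)
  qed (use p in auto)
qed

lemma long_return_close_to_fixed_point:
  assumes iso: "fixed_points_orbit_isolated \<delta>\<^sub>0" and "0 < r" "r < \<delta>\<^sub>0" "e > 0" "\<rho> > 0"
  shows "\<exists>\<delta>>0. \<forall>p\<in>S. \<forall>w\<in>S. \<forall>L. fixed_point p \<and> e \<le> L \<and> (\<forall>v\<in>{0..L}. dist p (phi v w) \<le> r) \<and>
           dist w (phi L w) < \<delta> \<longrightarrow> dist p (phi L w) < \<rho>"
proof (rule ccontr)
  assume "\<not> ?thesis"
  then have counterexamples: "\<forall>\<delta>. \<delta> \<le> 0 \<or> (\<exists>p\<in>S. \<exists>w\<in>S. \<exists>L. fixed_point p \<and> e \<le> L \<and>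
      (\<forall>v\<in>{0..L}. dist p (phi v w) \<le> r) \<and> dist w (phi L w) < \<delta> \<and> \<rho> \<le> dist p (phi L w))"
    by (auto simp: not_less)
  have "\<forall>n. \<exists>p w L. p \<in> S \<and> w \<in> S \<and> fixed_point p \<and> e \<le> L \<and>
      (\<forall>v\<in>{0..L}. dist p (phi v w) \<le> r) \<and> dist w (phi L w) < inverse (real (Suc n)) \<and>
      \<rho> \<le> dist p (phi L w)"
  proof
    fix n
    show "\<exists>p w L. p \<in> S \<and> w \<in> S \<and> fixed_point p \<and> e \<le> L \<and>
      (\<forall>v\<in>{0..L}. dist p (phi v w) \<le> r) \<and> dist w (phi L w) < inverse (real (Suc n)) \<and>
      \<rho> \<le> dist p (phi L w)"
      using spec[OF counterexamples, of "inverse (real (Suc n))"] by (simp add: Bex_def) blast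
  qed
  from choice[OF this] obtain P where "\<forall>n. \<exists>w L. P n \<in> S \<and> w \<in> S \<and> fixed_point (P n) \<and> e \<le> L \<and>
      (\<forall>v\<in>{0..L}. dist (P n) (phi v w) \<le> r) \<and> dist w (phi L w) < inverse (real (Suc n)) \<and>
      \<rho> \<le> dist (P n) (phi L w)"
    by blast
  from choice[OF this] obtain W where "\<forall>n. \<exists>L. P n \<in> S \<and> W n \<in> S \<and> fixed_point (P n) \<and> e \<le> L \<and>
      (\<forall>v\<in>{0..L}. dist (P n) (phi v (W n)) \<le> r) \<and> dist (W n) (phi L (W n)) < inverse (real (Suc n)) \<and>
      \<rho> \<le> dist (P n) (phi L (W n))"
    by blast
  from choice[OF this] obtain L where PWL: "\<And>n. P n \<in> S" "\<And>n. W n \<in> S" "\<And>n. fixed_point (P n)"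
    "\<And>n. e \<le> L n" "\<And>n v. v \<in> {0..L n} \<Longrightarrow> dist (P n) (phi v (W n)) \<le> r"
    "\<And>n. dist (W n) (phi (L n) (W n)) < inverse (real (Suc n))"
    "\<And>n. \<rho> \<le> dist (P n) (phi (L n) (W n))"
    by blast
  obtain \<sigma> p l where \<sigma>: "strict_mono \<sigma>" and p: "p \<in> S" "l \<in> S"
    and P: "(P \<circ> \<sigma>) \<longlonglongrightarrow> p" and W: "(W \<circ> \<sigma>) \<longlonglongrightarrow> l" and L: "monoseq (L \<circ> \<sigma>)"
    by (rule convergent_pair_monotone_subseq[OF PWL(1,2)])
  have "fixed_point p"
    by (rule fixed_point_limit[OF P p(1)]) (simp_all add: PWL(1,3))
  have "dist ((W \<circ> \<sigma>) n) (phi ((L \<circ> \<sigma>) n) ((W \<circ> \<sigma>) n)) \<le> inverse (real (Suc (\<sigma> n)))" for n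
    using PWL(6)[of "\<sigma> n"] by simp
  then have return: "(\<lambda>n. phi ((L \<circ> \<sigma>) n) ((W \<circ> \<sigma>) n)) \<longlonglongrightarrow> l"
    by (rule LIMSEQ_dist_vanishing[OF W LIMSEQ_dist_le_inverse_Suc[OF \<sigma>]])
  have "\<rho> \<le> dist p l"
    by (rule LIMSEQ_le_const[OF tendsto_dist[OF P return]]) (use PWL(7) in auto)
  have orbit_close: "dist p (phi t l) \<le> r" for t
    by (rule limit_orbit_in_cball[where L="L \<circ> \<sigma>", OF P W p(2) _ _ _ \<open>e > 0\<close> return])
       (use PWL(2,4,5) L in \<open>simp_all add: o_def\<close>)
  have "\<forall>t. dist p (phi t l) < \<delta>\<^sub>0"
  proof
    fix t
    show "dist p (phi t l) < \<delta>\<^sub>0"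
      using orbit_close[of t] \<open>r < \<delta>\<^sub>0\<close> by linarith
  qed
  then have "l = p"
    using iso p(1,2) \<open>fixed_point p\<close> unfolding fixed_points_orbit_isolated_def by blast
  then show False
    using \<open>\<rho> \<le> dist p l\<close> \<open>\<rho> > 0\<close> by simp
qed

lemma orbit_dist_le_if_segment_in_cball:
  assumes y: "y \<in> S" and x: "x = phi c y"
    and cball: "\<And>u. u \<in> {min 0 c..max 0 c} \<Longrightarrow> dist p (phi u y) \<le> r"
  shows "orbit_dist S phi x y \<le> 2 * r"
proof -
  let ?seg = "orbit_segment y (min 0 c) (max 0 c)"
  have "x \<in> ?seg" "y \<in> ?seg"
    using x y by (auto intro: image_eqI[where x=0])
  moreover have "y \<in> range (\<lambda>t. phi t x)"
    using x y by (auto intro: range_eqI[where x="- c"])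
  ultimately have "orbit_dist S phi x y \<le> diameter ?seg"
    by (intro orbit_dist_le_diameter[OF y]) auto
  also have "diameter ?seg \<le> 2 * r"
  proof -
    have "dist a b \<le> 2 * r" if "a \<in> ?seg" "b \<in> ?seg" for a b
    proof -
      have "dist p a \<le> r" "dist p b \<le> r"
        using that cball by auto
      then show ?thesis
        using dist_triangle3[of a b p] by linarith
    qed
    then show ?thesis
      using \<open>y \<in> ?seg\<close> unfolding diameter_def by (auto intro!: cSUP_least)
  qed
  finally show ?thesis .
qed

lemma flow_homeo_shadowed_curve:
  assumes y: "y \<in> S" and h: "h \<in> incr_homeos" and "e > 0" "r > 0" "\<delta> \<le> r/8"
    and oscillation: "\<And>a b. \<bar>a - b\<bar> \<le> 2*e \<Longrightarrow> dist (phi a y) (phi b y) < r/3"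
    and short_return: "\<And>w u. w \<in> S \<Longrightarrow> u \<in> {e..2*e} \<Longrightarrow> dist (phi u w) w < \<delta> \<Longrightarrow>
        \<exists>p\<in>S. fixed_point p \<and> dist w p < r/6"
    and long_return: "\<And>p w L. p \<in> S \<Longrightarrow> w \<in> S \<Longrightarrow> fixed_point p \<Longrightarrow> e \<le> L \<Longrightarrow>
        (\<forall>v\<in>{0..L}. dist p (phi v w) \<le> r) \<Longrightarrow> dist w (phi L w) < \<delta> \<Longrightarrow> dist p (phi L w) < r/8"
    and shadow: "\<And>t. dist (phi (h t + c) y) (phi t y) < \<delta>"
  shows "homeo_shadowed_curve (\<lambda>t. phi t y) (\<lambda>t. h t + c) {p \<in> S. fixed_point p} e r \<delta>
           (\<lambda>w. inv h (w - c))"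
proof unfold_locales
  have shift: "phi (b - a) (phi a y) = phi b y" for a b
    using flow_add[OF y, of "b - a" a] by simp
  show "\<exists>p\<in>{p \<in> S. fixed_point p}. dist (phi a y) p < r/3 \<and> dist (phi b y) p < r/3"
    if lag: "e \<le> b - a" "b - a \<le> 2*e" and close: "dist (phi a y) (phi b y) < \<delta>" for a b
  proof -
    have "dist (phi (b - a) (phi a y)) (phi a y) < \<delta>"
      using close shift by (simp add: dist_commute)
    then obtain p where p: "p \<in> S" "fixed_point p" "dist (phi a y) p < r/6"
      using short_return[of "phi a y" "b - a"] lag y by auto
    have "dist (phi b y) p \<le> dist (phi a y) (phi b y) + dist (phi a y) p"
      using dist_triangle[of "phi b y" p "phi a y"] by (simp add: dist_commute)
    then have "dist (phi b y) p < r/3"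
      using p(3) close \<open>\<delta> \<le> r/8\<close> \<open>r > 0\<close> by linarith
    then show ?thesis
      using p \<open>r > 0\<close> by auto
  qed
  show "dist p (phi a y) < r/2 \<and> dist p (phi b y) < r/2"
    if "p \<in> {p \<in> S. fixed_point p}" "e \<le> b - a" "\<forall>v\<in>{a..b}. dist p (phi v y) \<le> r"
      "dist (phi a y) (phi b y) < \<delta>" for p a b
  proof -
    have "\<forall>v\<in>{0..b - a}. dist p (phi v (phi a y)) \<le> r"
    proof
      fix v assume "v \<in> {0..b - a}"
      then have "dist p (phi (v + a) y) \<le> r"
        using that(3) by simp
      then show "dist p (phi v (phi a y)) \<le> r"
        using flow_add[OF y, of v a] by simp
    qed
    then have "dist p (phi b y) < r/8"
      using long_return[of p "phi a y" "b - a"] that y shift by simp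
    moreover have "dist p (phi a y) \<le> dist p (phi b y) + dist (phi a y) (phi b y)"
      by (rule dist_triangle2)
    ultimately show ?thesis
      using that(4) \<open>\<delta> \<le> r/8\<close> \<open>r > 0\<close> by linarith
  qed
  show "continuous_on UNIV (\<lambda>t. h t + c)"
    by (intro continuous_intros incr_homeos_continuous[OF h])
  show "continuous_on UNIV (\<lambda>w. inv h (w - c))"
    by (intro continuous_on_compose2[OF incr_homeos_inv_continuous[OF h]] continuous_intros) auto
  show "mono (\<lambda>t. h t + c)"
    using incr_homeos_strict_mono[OF h] by (simp add: mono_def strict_mono_less_eq)
qed (use y \<open>e > 0\<close> \<open>r > 0\<close> oscillation shadow continuous_on_orbit
      incr_homeos_inv_apply[OF h] incr_homeos_apply_inv[OF h] in auto)

lemma shadowing_segment_in_cball: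
  assumes x: "x \<in> S" and y: "y \<in> S" and h: "h \<in> incr_homeos" and "e > 0" "r > 0" "\<delta> \<le> r/8"
    and oscillation: "\<And>a b. \<bar>a - b\<bar> \<le> 2*e \<Longrightarrow> dist (phi a y) (phi b y) < r/3"
    and short_return: "\<And>w u. w \<in> S \<Longrightarrow> u \<in> {e..2*e} \<Longrightarrow> dist (phi u w) w < \<delta> \<Longrightarrow>
        \<exists>p\<in>S. fixed_point p \<and> dist w p < r/6"
    and long_return: "\<And>p w L. p \<in> S \<Longrightarrow> w \<in> S \<Longrightarrow> fixed_point p \<Longrightarrow> e \<le> L \<Longrightarrow>
        (\<forall>v\<in>{0..L}. dist p (phi v w) \<le> r) \<Longrightarrow> dist w (phi L w) < \<delta> \<Longrightarrow> dist p (phi L w) < r/8"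
    and shadow: "\<forall>t. dist (phi (h t) x) (phi t y) < \<delta>"
    and meet: "\<bar>s\<bar> < e" "phi (h t0) x = phi (t0 + s) y"
  shows "\<exists>c p. x = phi c y \<and> (\<forall>u\<in>{min 0 c..max 0 c}. dist p (phi u y) \<le> r)"
proof -
  define c where "c = t0 + s - h t0"
  have "x = phi (- h t0) (phi (t0 + s) y)"
    using flow_minus_cancel[OF x, of "h t0"] meet(2) by simp
  then have x_c: "x = phi c y"
    using flow_add[OF y, of "- h t0" "t0 + s"] by (simp add: c_def)
  have "phi (h t + c) y = phi (h t) x" for t
    using flow_add[OF y] x_c by simp
  then have shadow_c: "dist (phi (h t + c) y) (phi t y) < \<delta>" for t
    using shadow by simp
  interpret homeo_shadowed_curve "\<lambda>t. phi t y" "\<lambda>t. h t + c" "{p \<in> S. fixed_point p}"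
      e r \<delta> "\<lambda>w. inv h (w - c)"
    by (rule flow_homeo_shadowed_curve[OF y h \<open>e > 0\<close> \<open>r > 0\<close> \<open>\<delta> \<le> r/8\<close> oscillation
          short_return long_return shadow_c])
  have "\<bar>(h t0 + c) - t0\<bar> \<le> 2*e"
    using meet(1) by (simp add: c_def)
  then obtain p where "\<forall>u\<in>{min 0 c..max 0 c}. dist p (phi u y) \<le> r"
    using lag_segment_in_ball[of t0 0] incr_homeos_zero[OF h] by auto
  with x_c show ?thesis
    by blast
qed

lemma kstar_shadowing_segment_in_cball:
  assumes ks: "kstar_expansive_flow S phi" and "r > 0"
  shows "\<exists>\<delta>>0. \<forall>x\<in>S. \<forall>y\<in>S. \<forall>h\<in>incr_homeos. (\<forall>t. dist (phi (h t) x) (phi t y) < \<delta>) \<longrightarrow>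
           (\<exists>c p. x = phi c y \<and> (\<forall>u\<in>{min 0 c..max 0 c}. dist p (phi u y) \<le> r))"
proof -
  obtain \<delta>\<^sub>0 where "\<delta>\<^sub>0 > 0" and iso: "fixed_points_orbit_isolated \<delta>\<^sub>0"
    using kstar_fixed_points_orbit_isolated[OF ks] by blast
  define r' where "r' = min r (\<delta>\<^sub>0/2)"
  have r': "0 < r'" "r' \<le> r" "r' < \<delta>\<^sub>0"
    using \<open>r > 0\<close> \<open>\<delta>\<^sub>0 > 0\<close> by (auto simp: r'_def)
  obtain \<tau>\<^sub>0 where "\<tau>\<^sub>0 > 0" and no_short: "\<forall>w\<in>S. \<forall>u. 0 < u \<and> u < \<tau>\<^sub>0 \<and> phi u w = w \<longrightarrow> fixed_point w"
    using kstar_no_short_periods[OF ks] by blast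
  obtain \<tau> where "\<tau> > 0" and oscillation:
    "\<forall>y\<in>S. \<forall>a b. \<bar>a - b\<bar> \<le> \<tau> \<longrightarrow> dist (phi a y) (phi b y) < r'/3"
    using uniformly_continuous_orbits[of "r'/3"] r' by auto
  define e where "e = min (\<tau>\<^sub>0/4) (\<tau>/2)"
  have e: "0 < e" "2*e < \<tau>\<^sub>0" "2*e \<le> \<tau>"
    using \<open>\<tau>\<^sub>0 > 0\<close> \<open>\<tau> > 0\<close> by (auto simp: e_def)
  obtain \<delta>\<^sub>s where "\<delta>\<^sub>s > 0" and short_return: "\<forall>w\<in>S. \<forall>u\<in>{e..2*e}. dist (phi u w) w < \<delta>\<^sub>s \<longrightarrow>
      (\<exists>p\<in>S. fixed_point p \<and> dist w p < r'/6)"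
    using short_return_near_fixed_point[OF no_short e(1,2), of "r'/6"] r' by auto
  obtain \<delta>\<^sub>l where "\<delta>\<^sub>l > 0" and long_return: "\<forall>p\<in>S. \<forall>w\<in>S. \<forall>L. fixed_point p \<and> e \<le> L \<and>
      (\<forall>v\<in>{0..L}. dist p (phi v w) \<le> r') \<and> dist w (phi L w) < \<delta>\<^sub>l \<longrightarrow> dist p (phi L w) < r'/8"
    using long_return_close_to_fixed_point[OF iso r'(1,3) e(1), of "r'/8"] r' by auto
  obtain \<delta>\<^sub>k where "\<delta>\<^sub>k > 0" and kstar: "\<forall>x\<in>S. \<forall>y\<in>S. \<forall>h\<in>incr_homeos.
      (\<forall>t. dist (phi (h t) x) (phi t y) < \<delta>\<^sub>k) \<longrightarrow> (\<exists>s t0. \<bar>s\<bar> < e \<and> phi (h t0) x = phi (t0 + s) y)"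
    using ks e(1) unfolding kstar_expansive_flow_def by blast
  define \<delta> where "\<delta> = min \<delta>\<^sub>k (min \<delta>\<^sub>s (min \<delta>\<^sub>l (r'/8)))"
  have "\<delta> > 0" "\<delta> \<le> \<delta>\<^sub>k" "\<delta> \<le> \<delta>\<^sub>s" "\<delta> \<le> \<delta>\<^sub>l" "\<delta> \<le> r'/8"
    using \<open>\<delta>\<^sub>k > 0\<close> \<open>\<delta>\<^sub>s > 0\<close> \<open>\<delta>\<^sub>l > 0\<close> r' by (auto simp: \<delta>_def)
  have short_return_\<delta>: "\<exists>p\<in>S. fixed_point p \<and> dist w p < r'/6"
    if "w \<in> S" "u \<in> {e..2*e}" "dist (phi u w) w < \<delta>" for w u
    using short_return that \<open>\<delta> \<le> \<delta>\<^sub>s\<close> by (meson order.strict_trans2)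
  have long_return_\<delta>: "dist p (phi L w) < r'/8"
    if "p \<in> S" "w \<in> S" "fixed_point p" "e \<le> L" "\<forall>v\<in>{0..L}. dist p (phi v w) \<le> r'"
      "dist w (phi L w) < \<delta>" for p w L
    using long_return that \<open>\<delta> \<le> \<delta>\<^sub>l\<close> by (meson order.strict_trans2)
  have "\<exists>c p. x = phi c y \<and> (\<forall>u\<in>{min 0 c..max 0 c}. dist p (phi u y) \<le> r)"
    if x: "x \<in> S" and y: "y \<in> S" and h: "h \<in> incr_homeos"
      and shadow: "\<forall>t. dist (phi (h t) x) (phi t y) < \<delta>" for x y h
  proof -
    have "\<forall>t. dist (phi (h t) x) (phi t y) < \<delta>\<^sub>k"
      using shadow \<open>\<delta> \<le> \<delta>\<^sub>k\<close> by (meson order.strict_trans2)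
    then obtain s t0 where meet: "\<bar>s\<bar> < e" "phi (h t0) x = phi (t0 + s) y"
      using kstar x y h by blast
    have oscillation_y: "dist (phi a y) (phi b y) < r'/3" if "\<bar>a - b\<bar> \<le> 2*e" for a b
      using oscillation y that e(3) by simp
    have "\<exists>c p. x = phi c y \<and> (\<forall>u\<in>{min 0 c..max 0 c}. dist p (phi u y) \<le> r')"
      by (rule shadowing_segment_in_cball[OF x y h e(1) r'(1) \<open>\<delta> \<le> r'/8\<close> oscillation_y
            short_return_\<delta> long_return_\<delta> shadow meet])
    then obtain c p where "x = phi c y" and p: "\<forall>u\<in>{min 0 c..max 0 c}. dist p (phi u y) \<le> r'"
      by blast
    moreover have "\<forall>u\<in>{min 0 c..max 0 c}. dist p (phi u y) \<le> r"
      using p r'(2) by fastforce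
    ultimately show ?thesis
      by blast
  qed
  then show ?thesis
    using \<open>\<delta> > 0\<close> by blast
qed

lemma kstar_imp_expansive:
  assumes ks: "kstar_expansive_flow S phi"
  shows "expansive_flow S phi"
  unfolding expansive_flow_def
proof (intro allI impI)
  fix \<beta> :: real assume "\<beta> > 0"
  then obtain \<delta> where "\<delta> > 0" and \<delta>: "\<forall>x\<in>S. \<forall>y\<in>S. \<forall>h\<in>incr_homeos.
      (\<forall>t. dist (phi (h t) x) (phi t y) < \<delta>) \<longrightarrow>
      (\<exists>c p. x = phi c y \<and> (\<forall>u\<in>{min 0 c..max 0 c}. dist p (phi u y) \<le> \<beta>/3))"
    using kstar_shadowing_segment_in_cball[OF ks, of "\<beta>/3"] by auto
  have "orbit_dist S phi x y < \<beta>"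
    if x: "x \<in> S" and y: "y \<in> S" and h: "h \<in> incr_homeos"
      and shadow: "\<forall>t. dist (phi (h t) x) (phi t y) < \<delta>" for x y h
  proof -
    obtain c p where "x = phi c y" "\<forall>u\<in>{min 0 c..max 0 c}. dist p (phi u y) \<le> \<beta>/3"
      using \<delta> x y h shadow by blast
    then have "orbit_dist S phi x y \<le> 2 * (\<beta>/3)"
      using orbit_dist_le_if_segment_in_cball[OF y] by blast
    then show ?thesis
      using \<open>\<beta> > 0\<close> by linarith
  qed
  then show "\<exists>\<delta>>0. \<forall>x\<in>S. \<forall>y\<in>S. \<forall>h\<in>incr_homeos.
      (\<forall>t. dist (phi (h t) x) (phi t y) < \<delta>) \<longrightarrow> orbit_dist S phi x y < \<beta>"
    using \<open>\<delta> > 0\<close> by blast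
qed

end

theorem theorem1p3:
  fixes S :: "'a::metric_space set" and phi :: "real \<Rightarrow> 'a \<Rightarrow> 'a"
  assumes "compact S" and "is_flow S phi"
  shows "expansive_flow S phi \<longleftrightarrow> kstar_expansive_flow S phi"
proof -
  interpret compact_flow S phi
    using assms by unfold_locales
  show ?thesis
    using expansive_imp_kstar_expansive kstar_imp_expansive by blast
qed

end
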